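(* Let $\mathcal X$ be a finite set, $\mathcal H$ a $d$-dimensional Hilbert space, and $\{x\mapsto\rho^B_x(\theta)\}_{\theta\in\Theta}$ a compound cq-channel with $\rho^B_x(\theta)\in\mathcal D(\mathcal H)$ and $\Theta$ an arbitrary index set. There is a constant $K>0$ depending only on $d$ such that for every $T\in\mathbb N$ there exists a compound cq-channel $\{x\mapsto\rho^B_x(\widetilde\theta)\}_{\widetilde\theta\in\widetilde\Theta}$ with $\rho^B_x(\widetilde\theta)\in\mathcal D(\mathcal H)$ such that: (1) $|\widetilde\Theta|\le K^{|\mathcal X|}T^{6|\mathcal X|d^2}$; (2) for every $\theta\in\Theta$ there is $\widetilde\theta\in\widetilde\Theta$ such that for all $\mathbf x\in\mathcal X^T$, $\|\rho^{\mathbf B}_{\mathbf x}(\theta)-\rho^{\mathbf B}_{\mathbf x}(\widetilde\theta)\|_1\le T^{-5}$; (3) for every PMF $P_X$ on $\mathcal X$, $\min_{\widetilde\theta\in\widetilde\Theta}I(P_X,\rho^B_x(\widetilde\theta))\ge\inf_{\theta\in\Theta}I(P_X,\rho^B_x(\theta))-2T^{-6}\log(T^6d)$.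
   Context: For $\mathbf x=(x_1,\dots,x_T)$, $\rho^{\mathbf B}_{\mathbf x}(\theta)=\rho^B_{x_1}(\theta)\otimes\cdots\otimes\rho^B_{x_T}(\theta)$. $\|X\|_1=\operatorname{tr}\sqrt{X^\dagger X}$. $I(P_X,\rho_x)=H(\sum_xP_X(x)\rho_x)-\sum_xP_X(x)H(\rho_x)$ is the Holevo information, $H$ the von Neumann entropy. *)

theory Defs
  imports "Jordan_Normal_Form.Char_Poly"
begin

text \<open>Matrices over the complex numbers represent operators on the d-dimensional
Hilbert space H = C^d.\<close>

definition mtrace :: "complex mat \<Rightarrow> complex" where
  "mtrace A = (\<Sum>i<dim_row A. A $$ (i, i))"

definition adj :: "complex mat \<Rightarrow> complex mat" where
  "adj A = mat (dim_col A) (dim_row A) (\<lambda>(i, j). cnj (A $$ (j, i)))"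

definition psd :: "nat \<Rightarrow> complex mat \<Rightarrow> bool" where
  "psd n A \<longleftrightarrow> A \<in> carrier_mat n n \<and> adj A = A \<and>
     (\<forall>v :: nat \<Rightarrow> complex. 0 \<le> Re (\<Sum>i<n. \<Sum>j<n. cnj (v i) * A $$ (i, j) * v j))"

definition density :: "nat \<Rightarrow> complex mat \<Rightarrow> bool" where
  "density d A \<longleftrightarrow> psd d A \<and> mtrace A = 1"

definition psd_sqrt :: "complex mat \<Rightarrow> complex mat" where
  "psd_sqrt A = (THE S. psd (dim_row A) S \<and> S * S = A)"

definition trace_norm :: "complex mat \<Rightarrow> real" where
  "trace_norm X = Re (mtrace (psd_sqrt (adj X * X)))"

definition kron :: "complex mat \<Rightarrow> complex mat \<Rightarrow> complex mat" where
  "kron A B = mat (dim_row A * dim_row B) (dim_col A * dim_col B)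
     (\<lambda>(i, j). A $$ (i div dim_row B, j div dim_col B) * B $$ (i mod dim_row B, j mod dim_col B))"

definition tensor_list :: "complex mat list \<Rightarrow> complex mat" where
  "tensor_list As = foldr kron As (1\<^sub>m 1)"

definition channel_word :: "(nat \<Rightarrow> complex mat) \<Rightarrow> nat list \<Rightarrow> complex mat" where
  "channel_word \<rho> xs = tensor_list (map \<rho> xs)"

text \<open>Von Neumann entropy H(A) = - sum_lambda lambda log lambda over the eigenvalues
(with algebraic multiplicity, i.e. roots of the characteristic polynomial);
natural logarithm, with 0 log 0 = 0.\<close>
definition vn_entropy :: "complex mat \<Rightarrow> real" where
  "vn_entropy A = - (\<Sum>e\<in>{e. poly (char_poly A) e = 0}.
      real (order e (char_poly A)) * (Re e * ln (Re e)))"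

definition is_pmf_on :: "nat set \<Rightarrow> (nat \<Rightarrow> real) \<Rightarrow> bool" where
  "is_pmf_on X P \<longleftrightarrow> (\<forall>x\<in>X. 0 \<le> P x) \<and> (\<Sum>x\<in>X. P x) = 1"

definition holevo :: "nat \<Rightarrow> nat set \<Rightarrow> (nat \<Rightarrow> real) \<Rightarrow> (nat \<Rightarrow> complex mat) \<Rightarrow> real" where
  "holevo d X P \<rho> =
     vn_entropy (mat d d (\<lambda>(i, j). \<Sum>x\<in>X. complex_of_real (P x) * \<rho> x $$ (i, j)))
     - (\<Sum>x\<in>X. P x * vn_entropy (\<rho> x))"

definition cq_channel :: "nat \<Rightarrow> nat set \<Rightarrow> (nat \<Rightarrow> complex mat) \<Rightarrow> bool" where
  "cq_channel d X \<rho> \<longleftrightarrow> (\<forall>x\<in>X. density d (\<rho> x))"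

end

theory Submission
  imports Defs "Jordan_Normal_Form.Schur_Decomposition" "HOL-Analysis.L2_Norm"
begin

text \<open>
  The net is taken inside the family itself. Entries of a density matrix lie in the unit disc, so
  rounding the real parts of the upper triangle and the imaginary parts of the strict upper
  triangle of every \<open>\<rho>\<^sub>x(\<theta>)\<close> to the grid \<open>\<int>/L\<close>, \<open>L = 2 d\<^sup>2 T\<^sup>6\<close>, splits \<open>\<Theta>\<close> into at most
  \<open>(2L + 1)\<^bsup>|X| d\<^sup>2\<^esup>\<close> classes; one representative is kept per class. Channels in one class
  differ by at most \<open>T\<^sup>-\<^sup>6\<close> in the entrywise \<open>l\<^sub>1\<close> norm at every input.

  The trace norm is dual to the operator norm. Pairing
  \<open>\<rho>\<^sub>1 \<otimes> R - \<sigma>\<^sub>1 \<otimes> S = \<rho>\<^sub>1 \<otimes> (R - S) + (\<rho>\<^sub>1 - \<sigma>\<^sub>1) \<otimes> S\<close> with a contraction telescopes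
  along the word: a density factor costs nothing, being a convex combination of rank-one
  projections each of which compresses a contraction to a contraction, while a difference factor
  costs its entrywise \<open>l\<^sub>1\<close> norm. Hence words of length \<open>T\<close> are \<open>T \<cdot> T\<^sup>-\<^sup>6\<close>-close in trace norm.
  Since the representatives belong to \<open>\<Theta>\<close>, the Holevo bound is immediate once the infimum is
  known to be finite, which holds because entropies of \<open>d\<close>-dimensional states lie in \<open>[0, d\<^sup>2]\<close>.
\<close>

lemma index_mult_mat_sum:
  assumes "A \<in> carrier_mat m n" "B \<in> carrier_mat n p" "i < m" "j < p"
  shows "(A * B) $$ (i, j) = (\<Sum>k<n. A $$ (i, k) * B $$ (k, j))"
  using assms by (auto simp: scalar_prod_def atLeast0LessThan intro!: sum.cong)

lemma adj_dim[simp]: "dim_row (adj A) = dim_col A" "dim_col (adj A) = dim_row A"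
  by (auto simp: adj_def)

lemma adj_carrier[simp]: "A \<in> carrier_mat m n \<Longrightarrow> adj A \<in> carrier_mat n m"
  by (auto simp: adj_def)

lemma index_adj[simp]: "i < dim_col A \<Longrightarrow> j < dim_row A \<Longrightarrow> adj A $$ (i, j) = cnj (A $$ (j, i))"
  by (auto simp: adj_def)

lemma adj_adj[simp]: "adj (adj A) = A"
  by (rule eq_matI, auto)

lemma adj_one[simp]: "adj (1\<^sub>m n) = 1\<^sub>m n"
  by (rule eq_matI, auto)

lemma adj_minus: "A \<in> carrier_mat m n \<Longrightarrow> B \<in> carrier_mat m n \<Longrightarrow> adj (A - B) = adj A - adj B"
  by (rule eq_matI, auto)

lemma adj_mult:
  assumes "A \<in> carrier_mat m n" "B \<in> carrier_mat n p"
  shows "adj (A * B) = adj B * adj A"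
proof (rule eq_matI)
  fix i j assume ij: "i < dim_row (adj B * adj A)" "j < dim_col (adj B * adj A)"
  have "adj (A * B) $$ (i, j) = cnj ((A * B) $$ (j, i))" using ij assms by auto
  also have "\<dots> = (\<Sum>k<n. cnj (A $$ (j, k)) * cnj (B $$ (k, i)))"
    using ij assms by (subst index_mult_mat_sum[OF assms], auto)
  also have "\<dots> = (adj B * adj A) $$ (i, j)"
    using ij assms by (subst index_mult_mat_sum[of _ p n _ m], auto intro!: sum.cong)
  finally show "adj (A * B) $$ (i, j) = (adj B * adj A) $$ (i, j)" .
qed (use assms in auto)

lemma hermitian_index_cnj:
  "A \<in> carrier_mat n n \<Longrightarrow> adj A = A \<Longrightarrow> i < n \<Longrightarrow> j < n \<Longrightarrow> A $$ (i, j) = cnj (A $$ (j, i))"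
  using index_adj[of i A j] by auto

lemma mtrace_mult_comm:
  assumes "A \<in> carrier_mat m n" "B \<in> carrier_mat n m"
  shows "mtrace (A * B) = mtrace (B * A)"
proof -
  have "mtrace (A * B) = (\<Sum>i<m. \<Sum>k<n. A $$ (i, k) * B $$ (k, i))"
    unfolding mtrace_def using assms
    by (auto simp del: index_mult_mat(1) simp: index_mult_mat_sum intro!: sum.cong)
  also have "\<dots> = (\<Sum>k<n. \<Sum>i<m. B $$ (k, i) * A $$ (i, k))"
    by (subst sum.swap, simp add: mult.commute)
  also have "\<dots> = mtrace (B * A)"
    unfolding mtrace_def using assms
    by (auto simp del: index_mult_mat(1) simp: index_mult_mat_sum intro!: sum.cong)
  finally show ?thesis .
qed

lemma mtrace_add: "A \<in> carrier_mat n n \<Longrightarrow> B \<in> carrier_mat n n \<Longrightarrow> mtrace (A + B) = mtrace A + mtrace B"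
  unfolding mtrace_def by (auto simp: sum.distrib)

lemma mat_diag_dims[simp]: "dim_row (mat_diag n f) = n" "dim_col (mat_diag n f) = n"
  by (auto simp: mat_diag_def)

lemma index_mat_diag[simp]: "i < n \<Longrightarrow> j < n \<Longrightarrow> mat_diag n f $$ (i, j) = (if i = j then f i else 0)"
  by (auto simp: mat_diag_def)

definition unitary :: "nat \<Rightarrow> complex mat \<Rightarrow> bool" where
  "unitary n U \<longleftrightarrow> U \<in> carrier_mat n n \<and> adj U * U = 1\<^sub>m n \<and> U * adj U = 1\<^sub>m n"

lemma unitaryD:
  assumes "unitary n U"
  shows "U \<in> carrier_mat n n" "adj U * U = 1\<^sub>m n" "U * adj U = 1\<^sub>m n"
  using assms unfolding unitary_def by auto

lemma unitary_mult: "unitary n U \<Longrightarrow> unitary n V \<Longrightarrow> unitary n (U * V)"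
  unfolding unitary_def
proof (elim conjE, intro conjI)
  assume U: "U \<in> carrier_mat n n" and V: "V \<in> carrier_mat n n"
    and u1: "adj U * U = 1\<^sub>m n" "U * adj U = 1\<^sub>m n" and v1: "adj V * V = 1\<^sub>m n" "V * adj V = 1\<^sub>m n"
  show "U * V \<in> carrier_mat n n" using U V by auto
  have "adj (U * V) * (U * V) = adj V * (adj U * U) * V"
    using U V by (simp add: adj_mult[OF U V] assoc_mult_mat[of _ n n _ n _ n] mult_carrier_mat[of _ n n _ n])
  then show "adj (U * V) * (U * V) = 1\<^sub>m n" using u1 v1 V by simp
  have "U * V * adj (U * V) = U * (V * adj V) * adj U"
    using U V by (simp add: adj_mult[OF U V] assoc_mult_mat[of _ n n _ n _ n] mult_carrier_mat[of _ n n _ n])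
  then show "U * V * adj (U * V) = 1\<^sub>m n" using u1 v1 U by simp
qed

lemma unitary_conj_cancel:
  assumes W: "unitary n W" and A: "A \<in> carrier_mat n n"
  shows "W * (adj W * (A * W)) * adj W = A"
proof -
  note Wc = unitaryD(1)[OF W]
  have "W * (adj W * (A * W)) * adj W = (W * adj W) * A * (W * adj W)"
    using A Wc by (simp add: assoc_mult_mat[of _ n n _ n _ n] mult_carrier_mat[of _ n n _ n])
  then show ?thesis using unitaryD(3)[OF W] A by simp
qed

lemma hermitian_unitary_conj:
  assumes W: "unitary n W" and A: "A \<in> carrier_mat n n" "adj A = A"
  shows "adj (adj W * (A * W)) = adj W * (A * W)"
proof -
  note Wc = unitaryD(1)[OF W]
  have "adj (adj W * (A * W)) = adj (A * W) * W"
    using adj_mult[OF adj_carrier[OF Wc], of "A * W" n] A Wc by simp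
  also have "\<dots> = adj W * (A * W)"
    using adj_mult[OF A(1) Wc] A(2) assoc_mult_mat[OF adj_carrier[OF Wc] A(1) Wc] by simp
  finally show ?thesis .
qed

lemma cscalar_prod_self:
  assumes "w \<in> carrier_vec n"
  shows "w \<bullet>c w = complex_of_real (\<Sum>k<n. (cmod (w $ k))\<^sup>2)"
proof -
  have "w \<bullet>c w = (\<Sum>k<n. w $ k * cnj (w $ k))"
    using assms by (auto simp: scalar_prod_def atLeast0LessThan)
  also have "\<dots> = (\<Sum>k<n. complex_of_real ((cmod (w $ k))\<^sup>2))"
    by (rule sum.cong, simp, rule complex_norm_square[symmetric])
  finally show ?thesis by simp
qed

definition normalise :: "complex vec \<Rightarrow> complex vec" where
  "normalise w = complex_of_real (1 / sqrt (Re (w \<bullet>c w))) \<cdot>\<^sub>v w"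

lemma normalise_unit:
  assumes "v \<in> carrier_vec n" "(\<Sum>i<n. (cmod (v $ i))\<^sup>2) = 1"
  shows "normalise v = v"
  using cscalar_prod_self[OF assms(1)] assms(2) unfolding normalise_def by simp

lemma unitary_of_corthogonal:
  assumes ws: "set ws \<subseteq> carrier_vec n" "corthogonal ws" "length ws = n"
  shows "unitary n (mat_of_cols n (map normalise ws))"
proof -
  define c where "c = (\<lambda>w. complex_of_real (1 / sqrt (Re (w \<bullet>c w))))"
  define W where "W = mat_of_cols n (map normalise ws)"
  have wsc: "\<And>i. i < n \<Longrightarrow> ws ! i \<in> carrier_vec n" using ws by auto
  have W: "W \<in> carrier_mat n n" unfolding W_def using ws by auto
  have Wij: "W $$ (i, j) = c (ws ! j) * (ws ! j) $ i" if ij: "i < n" "j < n" for i j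
  proof -
    have "dim_vec (ws ! j) = n" using wsc[OF ij(2)] by auto
    then show ?thesis unfolding W_def c_def normalise_def using ws ij by (auto simp: mat_of_cols_def)
  qed
  have c_normalises: "cnj (c (ws ! i)) * c (ws ! i) * (ws ! i \<bullet>c ws ! i) = 1" if i: "i < n" for i
  proof -
    obtain r where r: "ws ! i \<bullet>c ws ! i = complex_of_real r" "r = (\<Sum>k<n. (cmod ((ws ! i) $ k))\<^sup>2)"
      using cscalar_prod_self[OF wsc[OF i]] by auto
    have "r \<ge> 0" using r(2) by (auto intro: sum_nonneg)
    moreover have "r \<noteq> 0" using corthogonalD[OF ws(2), of i i] i ws(3) r(1) by auto
    ultimately have "(1 / sqrt r) * (1 / sqrt r) * r = 1" by (simp add: field_simps)
    then show ?thesis unfolding c_def r(1) by (metis Re_complex_of_real complex_cnj_complex_of_real of_real_1 of_real_mult)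
  qed
  have "adj W * W = 1\<^sub>m n"
  proof (rule eq_matI)
    fix i j assume "i < dim_row (1\<^sub>m n)" "j < dim_col (1\<^sub>m n)"
    hence ij: "i < n" "j < n" by auto
    have "(adj W * W) $$ (i, j) = (\<Sum>k<n. cnj (W $$ (k, i)) * W $$ (k, j))"
      using W ij by (subst index_mult_mat_sum[of _ n n _ n], auto)
    also have "\<dots> = cnj (c (ws ! i)) * c (ws ! j) * (ws ! j \<bullet>c ws ! i)"
      using wsc[OF ij(1)] wsc[OF ij(2)] ij
      by (auto simp: Wij sum_distrib_left scalar_prod_def atLeast0LessThan ac_simps intro!: sum.cong)
    also have "\<dots> = 1\<^sub>m n $$ (i, j)"
      using corthogonalD[OF ws(2), of j i] ij ws(3) c_normalises[of i] by auto
    finally show "(adj W * W) $$ (i, j) = 1\<^sub>m n $$ (i, j)" .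
  qed (use W in auto)
  moreover have "W * adj W = 1\<^sub>m n"
    using mat_mult_left_right_inverse[OF adj_carrier[OF W] W] \<open>adj W * W = 1\<^sub>m n\<close> by auto
  ultimately show ?thesis using W unfolding W_def unitary_def by blast
qed

lemma unitary_with_first_column:
  assumes v: "v \<in> carrier_vec n" and nv: "(\<Sum>i<n. (cmod (v $ i))\<^sup>2) = 1"
  shows "\<exists>W. unitary n W \<and> (\<forall>i<n. W $$ (i, 0) = v $ i)"
proof -
  have v0: "v \<noteq> 0\<^sub>v n" and n0: "n > 0" using nv by (auto, cases n, auto)
  interpret cof_vec_space n "TYPE(complex)" .
  define b where "b = basis_completion v"
  from basis_completion[OF v v0, folded b_def]
  have dist_b: "distinct b" and indep: "\<not> lin_dep (set b)" and bc: "set b \<subseteq> carrier_vec n"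
    and hdb: "hd b = v" and len_b: "length b = n" by auto
  from hdb len_b n0 obtain vs where bv: "b = v # vs" by (cases b, auto)
  define ws where "ws = gram_schmidt n b"
  from gram_schmidt_result[OF bc dist_b indep ws_def]
  have ws: "set ws \<subseteq> carrier_vec n" "corthogonal ws" "length ws = n"
    by (auto simp: len_b)
  from gram_schmidt_hd[OF v, of vs, folded bv] have "hd ws = v" unfolding ws_def .
  then have "ws ! 0 = v" using ws(3) n0 by (cases ws, auto)
  then have "mat_of_cols n (map normalise ws) $$ (i, 0) = v $ i" if "i < n" for i
    using that n0 ws v normalise_unit[OF v nv] by (simp add: mat_of_cols_def)
  then show ?thesis using unitary_of_corthogonal[OF ws] by blast
qed

section \<open>Spectral theorem for Hermitian matrices\<close>

definition diag_cons :: "nat \<Rightarrow> complex \<Rightarrow> complex mat \<Rightarrow> complex mat" where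
  "diag_cons n a M = mat (Suc n) (Suc n)
     (\<lambda>(i, j). if i = 0 \<and> j = 0 then a else if i = 0 \<or> j = 0 then 0 else M $$ (i - 1, j - 1))"

lemma diag_cons_carrier[simp]: "diag_cons n a M \<in> carrier_mat (Suc n) (Suc n)"
  by (auto simp: diag_cons_def)

lemma index_diag_cons: "i < Suc n \<Longrightarrow> j < Suc n \<Longrightarrow> diag_cons n a M $$ (i, j) =
   (if i = 0 \<and> j = 0 then a else if i = 0 \<or> j = 0 then 0 else M $$ (i - 1, j - 1))"
  by (auto simp: diag_cons_def)

lemma diag_cons_mult:
  assumes "M \<in> carrier_mat n n" "M' \<in> carrier_mat n n"
  shows "diag_cons n a M * diag_cons n b M' = diag_cons n (a * b) (M * M')"
proof (rule eq_matI)
  fix i j assume "i < dim_row (diag_cons n (a * b) (M * M'))" "j < dim_col (diag_cons n (a * b) (M * M'))"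
  hence ij: "i < Suc n" "j < Suc n" by (auto simp: diag_cons_def)
  have "(diag_cons n a M * diag_cons n b M') $$ (i, j) =
      (\<Sum>k<Suc n. diag_cons n a M $$ (i, k) * diag_cons n b M' $$ (k, j))"
    using ij by (subst index_mult_mat_sum[of _ "Suc n" "Suc n" _ "Suc n"]) auto
  also have "\<dots> = diag_cons n a M $$ (i, 0) * diag_cons n b M' $$ (0, j)
      + (\<Sum>k<n. diag_cons n a M $$ (i, Suc k) * diag_cons n b M' $$ (Suc k, j))"
    by (subst sum.lessThan_Suc_shift) simp
  also have "\<dots> = diag_cons n (a * b) (M * M') $$ (i, j)"
    using ij assms by (cases i; cases j) (auto simp del: index_mult_mat(1) simp: index_diag_cons index_mult_mat_sum[OF assms])
  finally show "(diag_cons n a M * diag_cons n b M') $$ (i, j) = diag_cons n (a * b) (M * M') $$ (i, j)" .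
qed (auto simp: diag_cons_def)

lemma adj_diag_cons: "M \<in> carrier_mat n n \<Longrightarrow> adj (diag_cons n a M) = diag_cons n (cnj a) (adj M)"
  by (rule eq_matI, auto simp: index_diag_cons diag_cons_def)

lemma unitary_diag_cons: "unitary n V \<Longrightarrow> unitary (Suc n) (diag_cons n 1 V)"
proof -
  have "diag_cons n 1 (1\<^sub>m n) = 1\<^sub>m (Suc n)"
    by (rule eq_matI, auto simp: index_diag_cons diag_cons_def)
  then show "unitary n V \<Longrightarrow> unitary (Suc n) (diag_cons n 1 V)"
    unfolding unitary_def by (auto simp: adj_diag_cons diag_cons_mult)
qed

lemma diag_cons_mat_diag: "diag_cons n a (mat_diag n f) = mat_diag (Suc n) (\<lambda>i. if i = 0 then a else f (i - 1))"
  by (rule eq_matI, auto simp: index_diag_cons diag_cons_def)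

lemma unit_eigenvector_exists:
  assumes A: "A \<in> carrier_mat (Suc n) (Suc n)"
  obtains v e where "v \<in> carrier_vec (Suc n)" "(\<Sum>i<Suc n. (cmod (v $ i))\<^sup>2) = 1" "A *\<^sub>v v = e \<cdot>\<^sub>v v"
proof -
  have "degree (char_poly A) = Suc n" using degree_monic_char_poly[OF A] by auto
  then obtain e where "poly (char_poly A) e = 0"
    using fundamental_theorem_of_algebra[of "char_poly A"] constant_degree by force
  hence "eigenvalue A e" using eigenvalue_root_char_poly[OF A] by auto
  then obtain u where "eigenvector A u e" unfolding eigenvalue_def by auto
  hence u: "u \<in> carrier_vec (Suc n)" "u \<noteq> 0\<^sub>v (Suc n)" "A *\<^sub>v u = e \<cdot>\<^sub>v u"
    using A unfolding eigenvector_def by auto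
  define s where "s = sqrt (\<Sum>i<Suc n. (cmod (u $ i))\<^sup>2)"
  obtain i0 where i0: "i0 < Suc n" "u $ i0 \<noteq> 0"
    using u(1,2) by (metis carrier_vecD eq_vecI index_zero_vec)
  have "(\<Sum>i<Suc n. (cmod (u $ i))\<^sup>2) > 0" by (rule sum_pos2[of _ i0], use i0 in auto)
  hence s: "s > 0" "s\<^sup>2 = (\<Sum>i<Suc n. (cmod (u $ i))\<^sup>2)" unfolding s_def by auto
  define v where "v = complex_of_real (1 / s) \<cdot>\<^sub>v u"
  have "v \<in> carrier_vec (Suc n)" unfolding v_def using u by auto
  moreover have "(\<Sum>i<Suc n. (cmod (v $ i))\<^sup>2) = 1"
  proof -
    have "(\<Sum>i<Suc n. (cmod (v $ i))\<^sup>2) = (\<Sum>i<Suc n. (cmod (u $ i))\<^sup>2) / s\<^sup>2"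
      using u(1) by (simp add: v_def norm_divide power_divide sum_divide_distrib del: sum.lessThan_Suc)
    then show ?thesis using s by (metis divide_self less_numeral_extra(3) zero_less_power2)
  qed
  moreover have "A *\<^sub>v v = e \<cdot>\<^sub>v v"
    unfolding v_def using mult_mat_vec[OF A u(1)] u(3) smult_smult_assoc
    by (metis mult.commute)
  ultimately show ?thesis by (rule that)
qed

lemma mult_first_column_eigenvector:
  assumes A: "A \<in> carrier_mat n n" and W: "W \<in> carrier_mat n n" and v: "v \<in> carrier_vec n"
    and Av: "A *\<^sub>v v = e \<cdot>\<^sub>v v" and W0: "\<forall>i<n. W $$ (i, 0) = v $ i" and k: "k < n"
  shows "(A * W) $$ (k, 0) = e * W $$ (k, 0)"
proof -
  have "(A * W) $$ (k, 0) = (A *\<^sub>v v) $ k"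
    using k A W v W0 by (auto simp: index_mult_mat_sum[OF A W] scalar_prod_def atLeast0LessThan intro!: sum.cong)
  then show ?thesis using v Av k W0 by simp
qed

lemma hermitian_deflation:
  assumes A: "A \<in> carrier_mat (Suc n) (Suc n)" and hA: "adj A = A" and W: "unitary (Suc n) W"
    and col: "\<And>k. k < Suc n \<Longrightarrow> (A * W) $$ (k, 0) = e * W $$ (k, 0)"
  obtains B where "B \<in> carrier_mat n n" "adj B = B"
    "adj W * (A * W) = diag_cons n (complex_of_real (Re e)) B"
proof -
  note Wc = unitaryD(1)[OF W]
  define C where "C = adj W * (A * W)"
  have Cc: "C \<in> carrier_mat (Suc n) (Suc n)" unfolding C_def using Wc A by auto
  have C0: "C $$ (i, 0) = (if i = 0 then e else 0)" if i: "i < Suc n" for i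
  proof -
    have "C $$ (i, 0) = (\<Sum>k<Suc n. adj W $$ (i, k) * (A * W) $$ (k, 0))"
      unfolding C_def using i A Wc by (subst index_mult_mat_sum[of _ "Suc n" "Suc n" _ "Suc n"], auto)
    also have "\<dots> = e * (\<Sum>k<Suc n. adj W $$ (i, k) * W $$ (k, 0))"
      unfolding sum_distrib_left by (rule sum.cong) (simp_all add: col)
    also have "(\<Sum>k<Suc n. adj W $$ (i, k) * W $$ (k, 0)) = (adj W * W) $$ (i, 0)"
      using i Wc by (subst index_mult_mat_sum[of _ "Suc n" "Suc n" _ "Suc n"], auto)
    finally show ?thesis using unitaryD(2)[OF W] i by auto
  qed
  have C_sym: "C $$ (i, j) = cnj (C $$ (j, i))" if "i < Suc n" "j < Suc n" for i j
    using hermitian_index_cnj[OF Cc hermitian_unitary_conj[OF W A hA, folded C_def]] that .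
  have e_real: "e = complex_of_real (Re e)"
    using C_sym[of 0 0] C0[of 0] by (simp add: complex_eq_iff)
  define B where "B = mat n n (\<lambda>(i, j). C $$ (Suc i, Suc j))"
  have "B \<in> carrier_mat n n" unfolding B_def by auto
  moreover have "adj B = B"
    by (rule eq_matI) (auto simp: B_def intro: C_sym[symmetric])
  moreover have "C = diag_cons n (complex_of_real (Re e)) B"
  proof (rule eq_matI)
    fix i j assume "i < dim_row (diag_cons n (complex_of_real (Re e)) B)"
      "j < dim_col (diag_cons n (complex_of_real (Re e)) B)"
    hence ij: "i < Suc n" "j < Suc n" by (auto simp: diag_cons_def)
    show "C $$ (i, j) = diag_cons n (complex_of_real (Re e)) B $$ (i, j)"
      using ij C0 C_sym[of 0 j] C0[of j] e_real
      by (cases i; cases j) (simp_all add: index_diag_cons B_def)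
  qed (use Cc in \<open>auto simp: diag_cons_def\<close>)
  ultimately show ?thesis using that unfolding C_def by blast
qed

theorem hermitian_spectral:
  assumes "A \<in> carrier_mat n n" "adj A = A"
  shows "\<exists>U lam. unitary n U \<and> A = U * mat_diag n (\<lambda>i. complex_of_real (lam i)) * adj U"
  using assms
proof (induction n arbitrary: A)
  case 0
  have "A = 1\<^sub>m 0 * mat_diag 0 (\<lambda>i. complex_of_real 0) * adj (1\<^sub>m 0)"
    by (rule eq_matI, use 0 in auto)
  moreover have "unitary 0 (1\<^sub>m 0)" by (auto simp: unitary_def)
  ultimately show ?case by (intro exI[of _ "1\<^sub>m 0"] exI[of _ "\<lambda>_. 0"]) simp
next
  case (Suc n A)
  have A: "A \<in> carrier_mat (Suc n) (Suc n)" and hA: "adj A = A" using Suc.prems by auto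
  obtain v e where v: "v \<in> carrier_vec (Suc n)" "(\<Sum>i<Suc n. (cmod (v $ i))\<^sup>2) = 1" "A *\<^sub>v v = e \<cdot>\<^sub>v v"
    using unit_eigenvector_exists[OF A] .
  obtain W where W: "unitary (Suc n) W" and W0: "\<forall>i<Suc n. W $$ (i, 0) = v $ i"
    using unitary_with_first_column[OF v(1,2)] by auto
  note Wc = unitaryD(1)[OF W]
  have "(A * W) $$ (k, 0) = e * W $$ (k, 0)" if "k < Suc n" for k
    using mult_first_column_eigenvector[OF A Wc v(1,3) W0 that] .
  then obtain B where B: "B \<in> carrier_mat n n" "adj B = B"
    and AW: "adj W * (A * W) = diag_cons n (complex_of_real (Re e)) B"
    using hermitian_deflation[OF A hA W] by blast
  obtain V lam where V: "unitary n V" and BV: "B = V * mat_diag n (\<lambda>i. complex_of_real (lam i)) * adj V"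
    using Suc.IH[OF B] by auto
  note Vc = unitaryD(1)[OF V]
  define X where "X = diag_cons n 1 V"
  have Xc: "X \<in> carrier_mat (Suc n) (Suc n)" unfolding X_def by simp
  define lam' where "lam' = (\<lambda>i. if i = 0 then Re e else lam (i - 1))"
  have "mat_diag (Suc n) (\<lambda>i. complex_of_real (lam' i))
      = diag_cons n (complex_of_real (Re e)) (mat_diag n (\<lambda>i. complex_of_real (lam i)))"
    unfolding diag_cons_mat_diag lam'_def by (rule arg_cong[where f = "mat_diag (Suc n)"]) auto
  then have "adj W * (A * W) = X * mat_diag (Suc n) (\<lambda>i. complex_of_real (lam' i)) * adj X"
    unfolding AW BV X_def using Vc by (simp add: diag_cons_mult adj_diag_cons)
  moreover have "A = W * (adj W * (A * W)) * adj W" using unitary_conj_cancel[OF W A] ..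
  ultimately have "A = (W * X) * mat_diag (Suc n) (\<lambda>i. complex_of_real (lam' i)) * adj (W * X)"
    using Wc Xc by (simp add: adj_mult[OF Wc Xc] assoc_mult_mat[of _ "Suc n" "Suc n" _ "Suc n" _ "Suc n"]
        mult_carrier_mat[of _ "Suc n" "Suc n" _ "Suc n"])
  moreover have "unitary (Suc n) (W * X)" unfolding X_def by (rule unitary_mult[OF W unitary_diag_cons[OF V]])
  ultimately show ?case by blast
qed

declare index_mult_mat(1)[simp del]

lemma index_mult_mat_diag:
  "U \<in> carrier_mat m n \<Longrightarrow> i < m \<Longrightarrow> k < n \<Longrightarrow> (U * mat_diag n f) $$ (i, k) = U $$ (i, k) * f k"
  by (simp add: mat_diag_mult_right)

lemma index_mat_diag_mult:
  "V \<in> carrier_mat n m \<Longrightarrow> k < n \<Longrightarrow> j < m \<Longrightarrow> (mat_diag n f * V) $$ (k, j) = f k * V $$ (k, j)"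
  by (simp add: mat_diag_mult_left)

lemma adj_mat_diag: "adj (mat_diag n f) = mat_diag n (\<lambda>i. cnj (f i))"
  by (rule eq_matI, auto)

lemma index_mult_diag_adj:
  assumes U: "U \<in> carrier_mat n n" and ij: "i < n" "j < n"
  shows "(U * mat_diag n f * adj U) $$ (i, j) = (\<Sum>k<n. U $$ (i, k) * f k * cnj (U $$ (j, k)))"
  using assms by (subst index_mult_mat_sum[of _ n n _ n]) (auto simp: index_mult_mat_diag intro!: sum.cong)

lemma adj_mult_diag_adj:
  assumes "U \<in> carrier_mat n n"
  shows "adj (U * mat_diag n f * adj U) = U * mat_diag n (\<lambda>i. cnj (f i)) * adj U"
  using assms by (simp add: adj_mult[of _ n n _ n] adj_mat_diag mult_carrier_mat[of _ n n _ n]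
      assoc_mult_mat[of _ n n _ n _ n])

lemma mtrace_unitary_diag:
  assumes "unitary n U"
  shows "mtrace (U * mat_diag n f * adj U) = (\<Sum>k<n. f k)"
proof -
  note U = unitaryD(1)[OF assms]
  have "mtrace (U * mat_diag n f * adj U) = mtrace (U * (mat_diag n f * adj U))"
    using U by (simp add: assoc_mult_mat[of _ n n _ n _ n])
  also have "\<dots> = mtrace ((mat_diag n f * adj U) * U)"
    by (rule mtrace_mult_comm[of _ n n], use U in auto)
  also have "(mat_diag n f * adj U) * U = mat_diag n f"
    using U unitaryD(2)[OF assms] by (simp add: assoc_mult_mat[of _ n n _ n _ n])
  finally show ?thesis unfolding mtrace_def by simp
qed

lemma unitary_diag_mult:
  assumes "unitary n U"
  shows "(U * mat_diag n f * adj U) * (U * mat_diag n g * adj U) = U * mat_diag n (\<lambda>i. f i * g i) * adj U"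
proof -
  note U = unitaryD(1)[OF assms]
  have "(U * mat_diag n f * adj U) * (U * mat_diag n g * adj U) = U * mat_diag n f * (adj U * U) * mat_diag n g * adj U"
    using U by (simp add: assoc_mult_mat[of _ n n _ n _ n] mult_carrier_mat[of _ n n _ n])
  also have "\<dots> = U * (mat_diag n f * mat_diag n g) * adj U"
    using U unitaryD(2)[OF assms] by (simp add: assoc_mult_mat[of _ n n _ n _ n] mult_carrier_mat[of _ n n _ n])
  finally show ?thesis by simp
qed

definition sesq_form :: "nat \<Rightarrow> complex mat \<Rightarrow> (nat \<Rightarrow> complex) \<Rightarrow> (nat \<Rightarrow> complex) \<Rightarrow> complex" where
  "sesq_form n W y x = (\<Sum>i<n. \<Sum>j<n. cnj (y i) * W $$ (i, j) * x j)"

lemma psd_iff_sesq_form: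
  "psd n A \<longleftrightarrow> A \<in> carrier_mat n n \<and> adj A = A \<and> (\<forall>v. 0 \<le> Re (sesq_form n A v v))"
  unfolding psd_def sesq_form_def by auto

lemma sesq_form_mult_diag_adj:
  assumes U: "U \<in> carrier_mat n n"
  shows "sesq_form n (U * mat_diag n f * adj U) y x =
    (\<Sum>k<n. f k * (cnj (\<Sum>j<n. cnj (U $$ (j, k)) * y j) * (\<Sum>j<n. cnj (U $$ (j, k)) * x j)))"
proof -
  have "sesq_form n (U * mat_diag n f * adj U) y x =
     (\<Sum>i<n. \<Sum>j<n. \<Sum>k<n. f k * (cnj (y i) * U $$ (i, k)) * (cnj (U $$ (j, k)) * x j))"
    unfolding sesq_form_def using U
    by (intro sum.cong refl, auto simp: index_mult_diag_adj sum_distrib_left sum_distrib_right ac_simps)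
  also have "\<dots> = (\<Sum>k<n. \<Sum>i<n. \<Sum>j<n. f k * (cnj (y i) * U $$ (i, k)) * (cnj (U $$ (j, k)) * x j))"
    by (subst sum.swap, subst (2) sum.swap, simp)
  finally show ?thesis by (simp add: sum_distrib_left sum_product ac_simps)
qed

lemma cnj_mult_self: "cnj z * z = complex_of_real ((cmod z)\<^sup>2)"
  by (metis complex_norm_square mult.commute)

lemma psd_unitary_diag:
  assumes U: "unitary n U" and f: "\<And>k. k < n \<Longrightarrow> f k \<ge> 0"
  shows "psd n (U * mat_diag n (\<lambda>k. complex_of_real (f k)) * adj U)"
proof -
  note Uc = unitaryD(1)[OF U]
  have "0 \<le> Re (sesq_form n (U * mat_diag n (\<lambda>k. complex_of_real (f k)) * adj U) v v)" for v
    unfolding sesq_form_mult_diag_adj[OF Uc] cnj_mult_self using f by (auto simp: Re_sum intro!: sum_nonneg)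
  then show ?thesis unfolding psd_iff_sesq_form using Uc by (auto simp: adj_mult_diag_adj)
qed

lemma psd_eigenvalue_nonneg:
  assumes A: "psd n A" and U: "unitary n U" and Ad: "A = U * mat_diag n (\<lambda>k. complex_of_real (lam k)) * adj U"
    and k: "k < n"
  shows "lam k \<ge> 0"
proof -
  note Uc = unitaryD(1)[OF U]
  have col: "(\<Sum>j<n. cnj (U $$ (j, l)) * U $$ (j, k)) = (if l = k then 1 else 0)" if l: "l < n" for l
  proof -
    have "(\<Sum>j<n. cnj (U $$ (j, l)) * U $$ (j, k)) = (adj U * U) $$ (l, k)"
      using Uc l k by (subst index_mult_mat_sum[of _ n n _ n]) auto
    then show ?thesis using unitaryD(2)[OF U] l k by simp
  qed
  have "sesq_form n A (\<lambda>i. U $$ (i, k)) (\<lambda>i. U $$ (i, k))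
      = (\<Sum>l<n. if l = k then complex_of_real (lam l) else 0)"
    unfolding Ad sesq_form_mult_diag_adj[OF Uc] by (intro sum.cong refl, simp add: col)
  also have "\<dots> = complex_of_real (lam k)" using k by simp
  finally show ?thesis using A unfolding psd_iff_sesq_form by (metis Re_complex_of_real)
qed

lemma density_carrier: "density d A \<Longrightarrow> A \<in> carrier_mat d d"
  unfolding density_def psd_def by auto

lemma density_hermitian: "density d A \<Longrightarrow> adj A = A"
  unfolding density_def psd_def by auto

lemma density_spectral:
  assumes "density d \<rho>"
  obtains U lam where "unitary d U" "\<rho> = U * mat_diag d (\<lambda>k. complex_of_real (lam k)) * adj U"
    "\<And>k. k < d \<Longrightarrow> lam k \<ge> 0" "(\<Sum>k<d. lam k) = 1"
proof -
  have P: "psd d \<rho>" and tr: "mtrace \<rho> = 1" using assms unfolding density_def by auto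
  obtain U lam where U: "unitary d U" and rd: "\<rho> = U * mat_diag d (\<lambda>k. complex_of_real (lam k)) * adj U"
    using hermitian_spectral[of \<rho> d] P unfolding psd_iff_sesq_form by auto
  have "complex_of_real (\<Sum>k<d. lam k) = 1" using tr unfolding rd mtrace_unitary_diag[OF U] by simp
  then show ?thesis using that[OF U rd] psd_eigenvalue_nonneg[OF P U rd] by (metis of_real_eq_1_iff)
qed

lemma mult_diag_sqrt_commute:
  assumes P: "P \<in> carrier_mat n n" and s: "\<And>k. k < n \<Longrightarrow> s k \<ge> 0"
    and comm: "P * mat_diag n (\<lambda>k. complex_of_real ((s k)\<^sup>2)) = mat_diag n (\<lambda>k. complex_of_real ((lam k)\<^sup>2)) * P"
  shows "P * mat_diag n (\<lambda>k. complex_of_real (s k)) = mat_diag n (\<lambda>k. complex_of_real \<bar>lam k\<bar>) * P"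
proof (rule eq_matI)
  fix i j assume "i < dim_row (mat_diag n (\<lambda>k. complex_of_real \<bar>lam k\<bar>) * P)"
    "j < dim_col (mat_diag n (\<lambda>k. complex_of_real \<bar>lam k\<bar>) * P)"
  hence ij: "i < n" "j < n" using P by auto
  have e: "P $$ (i, j) * complex_of_real ((s j)\<^sup>2) = complex_of_real ((lam i)\<^sup>2) * P $$ (i, j)"
    using arg_cong[OF comm, of "\<lambda>M. M $$ (i, j)"] ij P
    by (simp add: index_mult_mat_diag[OF P] index_mat_diag_mult[OF P])
  have "P $$ (i, j) * complex_of_real (s j) = complex_of_real \<bar>lam i\<bar> * P $$ (i, j)"
  proof (cases "P $$ (i, j) = 0")
    case False
    with e have "complex_of_real ((s j)\<^sup>2) = complex_of_real ((lam i)\<^sup>2)"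
      by (simp add: mult.commute del: of_real_power)
    hence "(s j)\<^sup>2 = (lam i)\<^sup>2" using of_real_eq_iff by blast
    hence "s j = \<bar>lam i\<bar>" using s[OF ij(2)] by (metis real_sqrt_abs real_sqrt_unique)
    thus ?thesis by (simp add: mult.commute)
  qed simp
  thus "(P * mat_diag n (\<lambda>k. complex_of_real (s k))) $$ (i, j) = (mat_diag n (\<lambda>k. complex_of_real \<bar>lam k\<bar>) * P) $$ (i, j)"
    using ij by (simp add: index_mult_mat_diag[OF P] index_mat_diag_mult[OF P])
qed (use P in auto)

text \<open>A psd square root of \<open>U diag(lam\<^sup>2) U\<^sup>*\<close>, written in its own eigenbasis \<open>W\<close>,
  intertwines the two diagonalisations through \<open>P = U\<^sup>* W\<close>.\<close>
lemma psd_sqrt_unique: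
  assumes U: "unitary n U" and S: "psd n S"
    and SS: "S * S = U * mat_diag n (\<lambda>k. complex_of_real ((lam k)\<^sup>2)) * adj U"
  shows "S = U * mat_diag n (\<lambda>k. complex_of_real \<bar>lam k\<bar>) * adj U"
proof -
  note Uc = unitaryD(1)[OF U]
  obtain W s where W: "unitary n W" and Sd: "S = W * mat_diag n (\<lambda>i. complex_of_real (s i)) * adj W"
    using hermitian_spectral[of S n] S unfolding psd_iff_sesq_form by auto
  note Wc = unitaryD(1)[OF W]
  have s0: "\<And>k. k < n \<Longrightarrow> s k \<ge> 0" using psd_eigenvalue_nonneg[OF S W Sd] by auto
  define P where "P = adj U * W"
  have Pc: "P \<in> carrier_mat n n" unfolding P_def using Uc Wc by auto
  define S2 where "S2 = mat_diag n (\<lambda>k. complex_of_real ((s k)\<^sup>2))"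
  define L2 where "L2 = mat_diag n (\<lambda>k. complex_of_real ((lam k)\<^sup>2))"
  have S2_eq: "W * S2 * adj W = U * L2 * adj U"
    using SS unfolding Sd unitary_diag_mult[OF W] S2_def L2_def by (simp add: power2_eq_square)
  have "P * S2 = adj U * (W * S2 * adj W) * W"
    unfolding P_def S2_def using Uc Wc unitaryD(2)[OF W]
    by (simp add: assoc_mult_mat[of _ n n _ n _ n] mult_carrier_mat[of _ n n _ n])
  also have "\<dots> = (adj U * U) * L2 * P"
    unfolding S2_eq P_def L2_def using Uc Wc
    by (simp add: assoc_mult_mat[of _ n n _ n _ n] mult_carrier_mat[of _ n n _ n])
  also have "\<dots> = L2 * P"
    using unitaryD(2)[OF U] Pc unfolding L2_def by simp
  finally have comm: "P * mat_diag n (\<lambda>k. complex_of_real (s k)) = mat_diag n (\<lambda>k. complex_of_real \<bar>lam k\<bar>) * P"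
    using mult_diag_sqrt_commute[of P n s lam, OF Pc s0] unfolding S2_def L2_def by blast
  have UP: "U * P = W" unfolding P_def using Uc Wc unitaryD(3)[OF U]
    by (simp add: assoc_mult_mat[of _ n n _ n _ n, symmetric])
  have "S = U * (P * mat_diag n (\<lambda>i. complex_of_real (s i))) * adj W"
    unfolding Sd UP[symmetric] using Uc Pc
    by (simp add: assoc_mult_mat[of _ n n _ n _ n] mult_carrier_mat[of _ n n _ n])
  also have "\<dots> = U * mat_diag n (\<lambda>k. complex_of_real \<bar>lam k\<bar>) * (adj U * (W * adj W))"
    unfolding comm unfolding P_def using Uc Wc
    by (simp add: assoc_mult_mat[of _ n n _ n _ n] mult_carrier_mat[of _ n n _ n])
  finally show ?thesis using unitaryD(3)[OF W] Uc by simp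
qed

lemma trace_norm_unitary_diag:
  assumes U: "unitary n U"
  shows "trace_norm (U * mat_diag n (\<lambda>k. complex_of_real (lam k)) * adj U) = (\<Sum>k<n. \<bar>lam k\<bar>)"
proof -
  note Uc = unitaryD(1)[OF U]
  define D where "D = U * mat_diag n (\<lambda>k. complex_of_real (lam k)) * adj U"
  have DD: "adj D * D = U * mat_diag n (\<lambda>k. complex_of_real ((lam k)\<^sup>2)) * adj U"
    unfolding D_def adj_mult_diag_adj[OF Uc] unitary_diag_mult[OF U] by (simp add: power2_eq_square)
  define S where "S = U * mat_diag n (\<lambda>k. complex_of_real \<bar>lam k\<bar>) * adj U"
  have "psd_sqrt (adj D * D) = S"
    unfolding psd_sqrt_def
  proof (rule the_equality)
    have "S * S = adj D * D"
      unfolding S_def DD unitary_diag_mult[OF U] by (simp add: power2_eq_square abs_mult_self_eq flip: of_real_mult)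
    then show "psd (dim_row (adj D * D)) S \<and> S * S = adj D * D"
      unfolding S_def DD using psd_unitary_diag[OF U] Uc by simp
    show "psd (dim_row (adj D * D)) S' \<and> S' * S' = adj D * D \<Longrightarrow> S' = S" for S'
      unfolding S_def DD using psd_sqrt_unique[OF U] Uc by simp
  qed
  then show ?thesis unfolding trace_norm_def D_def[symmetric] by (simp add: S_def mtrace_unitary_diag[OF U] Re_sum)
qed

lemma trace_norm_eq_mtrace_sgn:
  assumes U: "unitary n U" and D: "D = U * mat_diag n (\<lambda>k. complex_of_real (lam k)) * adj U"
  shows "trace_norm D = Re (mtrace (D * (U * mat_diag n (\<lambda>k. complex_of_real (sgn (lam k))) * adj U)))"
  unfolding D trace_norm_unitary_diag[OF U] unitary_diag_mult[OF U]
  by (simp add: abs_sgn mtrace_unitary_diag[OF U] Re_sum flip: of_real_mult)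

section \<open>Contractions and the dual description of the trace norm\<close>

definition coord_norm :: "nat \<Rightarrow> (nat \<Rightarrow> complex) \<Rightarrow> real" where
  "coord_norm n x = L2_set (\<lambda>i. cmod (x i)) {..<n}"

definition contraction :: "nat \<Rightarrow> complex mat \<Rightarrow> bool" where
  "contraction n W \<longleftrightarrow> W \<in> carrier_mat n n \<and>
     (\<forall>x y. cmod (sesq_form n W y x) \<le> coord_norm n x * coord_norm n y)"

lemma coord_norm_unitary:
  assumes U: "unitary n U"
  shows "coord_norm n (\<lambda>k. \<Sum>j<n. cnj (U $$ (j, k)) * x j) = coord_norm n x"
proof -
  note Uc = unitaryD(1)[OF U]
  have "sesq_form n (1\<^sub>m n) x x = (\<Sum>p<n. cnj (x p) * x p)"
    unfolding sesq_form_def by (simp add: if_distrib if_distribR sum.delta cong: if_cong)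
  moreover have "U * mat_diag n (\<lambda>_. 1) * adj U = 1\<^sub>m n"
    using Uc unitaryD(3)[OF U] by simp
  ultimately have "(\<Sum>k<n. cnj (\<Sum>j<n. cnj (U $$ (j, k)) * x j) * (\<Sum>j<n. cnj (U $$ (j, k)) * x j))
      = (\<Sum>p<n. cnj (x p) * x p)"
    using sesq_form_mult_diag_adj[OF Uc, of "\<lambda>_. 1" x x] by simp
  then have "complex_of_real (\<Sum>k<n. (cmod (\<Sum>j<n. cnj (U $$ (j, k)) * x j))\<^sup>2)
      = complex_of_real (\<Sum>p<n. (cmod (x p))\<^sup>2)"
    unfolding cnj_mult_self of_real_sum .
  then show ?thesis unfolding coord_norm_def L2_set_def by (simp only: of_real_eq_iff norm_power)
qed

lemma contraction_unitary_diag: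
  assumes U: "unitary n U" and s: "\<And>k. k < n \<Longrightarrow> cmod (s k) \<le> 1"
  shows "contraction n (U * mat_diag n s * adj U)"
  unfolding contraction_def
proof (intro conjI allI)
  note Uc = unitaryD(1)[OF U]
  show "U * mat_diag n s * adj U \<in> carrier_mat n n" using Uc by auto
  fix x y
  define a where "a = (\<lambda>k. \<Sum>j<n. cnj (U $$ (j, k)) * y j)"
  define b where "b = (\<lambda>k. \<Sum>j<n. cnj (U $$ (j, k)) * x j)"
  have "cmod (sesq_form n (U * mat_diag n s * adj U) y x) = cmod (\<Sum>k<n. s k * (cnj (a k) * b k))"
    unfolding sesq_form_mult_diag_adj[OF Uc] a_def b_def ..
  also have "\<dots> \<le> (\<Sum>k<n. cmod (s k * (cnj (a k) * b k)))" by (rule norm_sum)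
  also have "\<dots> \<le> (\<Sum>k<n. \<bar>cmod (b k)\<bar> * \<bar>cmod (a k)\<bar>)"
    using s by (intro sum_mono) (simp add: norm_mult mult_left_le_one_le mult.commute)
  also have "\<dots> \<le> coord_norm n b * coord_norm n a"
    unfolding coord_norm_def by (rule L2_set_mult_ineq)
  also have "\<dots> = coord_norm n x * coord_norm n y" unfolding a_def b_def coord_norm_unitary[OF U] ..
  finally show "cmod (sesq_form n (U * mat_diag n s * adj U) y x) \<le> coord_norm n x * coord_norm n y" .
qed

lemma coord_norm_indicator:
  assumes "l < d"
  shows "coord_norm d (\<lambda>i. if i = l then 1 else 0) = 1"
proof -
  have "(\<Sum>i<d. (cmod (if i = l then 1 else 0 :: complex))\<^sup>2) = (\<Sum>i<d. if i = l then 1 else 0)"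
    by (rule sum.cong) auto
  then show ?thesis unfolding coord_norm_def L2_set_def using assms by simp
qed

lemma coord_norm_unitary_col:
  assumes U: "unitary d U" and k: "k < d"
  shows "coord_norm d (\<lambda>i. U $$ (i, k)) = 1"
proof -
  have "complex_of_real (\<Sum>i<d. (cmod (U $$ (i, k)))\<^sup>2) = (\<Sum>i<d. cnj (U $$ (i, k)) * U $$ (i, k))"
    by (simp only: of_real_sum cnj_mult_self)
  also have "\<dots> = (adj U * U) $$ (k, k)"
    using unitaryD(1)[OF U] k by (subst index_mult_mat_sum[of _ d d _ d]) auto
  also have "\<dots> = 1" using unitaryD(2)[OF U] k by simp
  finally show ?thesis unfolding coord_norm_def L2_set_def by (metis of_real_eq_1_iff real_sqrt_one)
qed

text \<open>The trace norm is the supremum of \<open>|tr (Y W)|\<close> over contractions \<open>W\<close>; bounds on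
  trace norms are proved through this dual description.\<close>
definition trace_pairing_le :: "nat \<Rightarrow> complex mat \<Rightarrow> real \<Rightarrow> bool" where
  "trace_pairing_le n Y B \<longleftrightarrow> (\<forall>W. contraction n W \<longrightarrow> cmod (mtrace (Y * W)) \<le> B)"

lemma trace_norm_le_if_trace_pairing_le:
  assumes D: "D \<in> carrier_mat n n" "adj D = D" and B: "trace_pairing_le n D B"
  shows "trace_norm D \<le> B"
proof -
  obtain U lam where U: "unitary n U" and Dd: "D = U * mat_diag n (\<lambda>k. complex_of_real (lam k)) * adj U"
    using hermitian_spectral[OF D] by auto
  define W where "W = U * mat_diag n (\<lambda>k. complex_of_real (sgn (lam k))) * adj U"
  have "contraction n W" unfolding W_def by (rule contraction_unitary_diag[OF U]) (simp add: abs_sgn_eq)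
  have "trace_norm D = Re (mtrace (D * W))" unfolding W_def by (rule trace_norm_eq_mtrace_sgn[OF U Dd])
  also have "\<dots> \<le> cmod (mtrace (D * W))" by (rule complex_Re_le_cmod)
  also have "\<dots> \<le> B" using B \<open>contraction n W\<close> unfolding trace_pairing_le_def by blast
  finally show ?thesis .
qed

lemma trace_pairing_le_add:
  assumes "Y \<in> carrier_mat n n" "Y' \<in> carrier_mat n n" "trace_pairing_le n Y B" "trace_pairing_le n Y' B'"
  shows "trace_pairing_le n (Y + Y') (B + B')"
  unfolding trace_pairing_le_def
proof (intro allI impI)
  fix W assume W: "contraction n W"
  then have "W \<in> carrier_mat n n" unfolding contraction_def by simp
  then have "mtrace ((Y + Y') * W) = mtrace (Y * W) + mtrace (Y' * W)"
    using assms(1,2) by (simp add: add_mult_distrib_mat[of _ n n] mtrace_add[of _ n])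
  then show "cmod (mtrace ((Y + Y') * W)) \<le> B + B'"
    using assms(3,4) W unfolding trace_pairing_le_def by (metis add_mono norm_triangle_le)
qed

lemma sum_lessThan_mult:
  fixes f :: "nat \<Rightarrow> 'a :: comm_monoid_add"
  shows "(\<Sum>p<d * m. f p) = (\<Sum>i<d. \<Sum>a<m. f (i * m + a))"
proof -
  have "sum f {i * m..<i * m + m} = (\<Sum>a<m. f (i * m + a))" for i
    using sum.shift_bounds_nat_ivl[of f 0 "i * m" m] by (simp add: lessThan_atLeast0 add.commute)
  then show ?thesis using sum.nat_group[of f m d] by simp
qed

lemma div_less_of_less_mult[simp]: "i < d * (m::nat) \<Longrightarrow> i div m < d"
  by (simp add: less_mult_imp_div_less)

lemma mod_less_of_less_mult[simp]: "i < d * (m::nat) \<Longrightarrow> i mod m < m"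
  by (cases m) auto

lemma kron_dim[simp]:
  "dim_row (kron A B) = dim_row A * dim_row B" "dim_col (kron A B) = dim_col A * dim_col B"
  by (auto simp: kron_def)

lemma kron_carrier[simp]: "A \<in> carrier_mat d d \<Longrightarrow> B \<in> carrier_mat m m \<Longrightarrow> kron A B \<in> carrier_mat (d * m) (d * m)"
  by (auto simp: kron_def)

lemma index_kron_dim[simp]:
  "i < dim_row A * dim_row B \<Longrightarrow> j < dim_col A * dim_col B \<Longrightarrow>
   kron A B $$ (i, j) = A $$ (i div dim_row B, j div dim_col B) * B $$ (i mod dim_row B, j mod dim_col B)"
  by (auto simp: kron_def)

lemma index_kron:
  assumes "A \<in> carrier_mat d d" "B \<in> carrier_mat m m" "i < d * m" "j < d * m"
  shows "kron A B $$ (i, j) = A $$ (i div m, j div m) * B $$ (i mod m, j mod m)"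
  using assms by auto

lemma mult_add_div_mod[simp]:
  assumes "a < (m::nat)"
  shows "(i * m + a) div m = i" "(i * m + a) mod m = a"
  using assms by auto

lemma mult_add_less_mult: "i < d \<Longrightarrow> a < m \<Longrightarrow> i * m + a < d * (m::nat)"
proof -
  assume "i < d" "a < m"
  then have "i * m + a < Suc i * m" by simp
  also have "\<dots> \<le> d * m" using \<open>i < d\<close> by (intro mult_right_mono) auto
  finally show ?thesis .
qed

lemma index_kron_mult_add[simp]:
  assumes "A \<in> carrier_mat d d" "B \<in> carrier_mat m m" "i < d" "a < m" "j < d" "b < m"
  shows "kron A B $$ (i * m + a, j * m + b) = A $$ (i, j) * B $$ (a, b)"
  using assms by (simp add: index_kron mult_add_less_mult)

lemma tensor_list_Cons: "tensor_list (A # As) = kron A (tensor_list As)"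
  unfolding tensor_list_def by simp

lemma tensor_list_carrier:
  "(\<forall>A\<in>set As. A \<in> carrier_mat d d) \<Longrightarrow> tensor_list As \<in> carrier_mat (d ^ length As) (d ^ length As)"
  by (induction As) (auto simp: tensor_list_def)

lemma adj_kron:
  assumes "A \<in> carrier_mat d d" "B \<in> carrier_mat m m"
  shows "adj (kron A B) = kron (adj A) (adj B)"
  by (rule eq_matI) (use assms in \<open>auto simp: index_kron\<close>)

lemma adj_tensor_list:
  "(\<forall>A\<in>set As. A \<in> carrier_mat d d \<and> adj A = A) \<Longrightarrow> adj (tensor_list As) = tensor_list As"
proof (induction As)
  case (Cons A As)
  have "tensor_list As \<in> carrier_mat (d ^ length As) (d ^ length As)"
    using Cons.prems by (intro tensor_list_carrier) auto
  then show ?case unfolding tensor_list_Cons using Cons by (simp add: adj_kron[of _ d])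
qed (simp add: tensor_list_def)

lemma kron_diff:
  assumes "A \<in> carrier_mat d d" "A' \<in> carrier_mat d d" "B \<in> carrier_mat m m" "B' \<in> carrier_mat m m"
  shows "kron A B - kron A' B' = kron A (B - B') + kron (A - A') B'"
  by (rule eq_matI) (use assms in \<open>auto simp: index_kron algebra_simps\<close>)

definition kron_coord :: "nat \<Rightarrow> (nat \<Rightarrow> complex) \<Rightarrow> (nat \<Rightarrow> complex) \<Rightarrow> nat \<Rightarrow> complex" where
  "kron_coord m x z p = x (p div m) * z (p mod m)"

text \<open>The block \<open>(y\<^sup>* \<otimes> I) W (x \<otimes> I)\<close> of a \<open>dm \<times> dm\<close> matrix \<open>W\<close>.\<close>
definition compress :: "nat \<Rightarrow> nat \<Rightarrow> complex mat \<Rightarrow> (nat \<Rightarrow> complex) \<Rightarrow> (nat \<Rightarrow> complex) \<Rightarrow> complex mat" where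
  "compress d m W y x = mat m m (\<lambda>(a, b). \<Sum>i<d. \<Sum>j<d. cnj (y i) * W $$ (i * m + a, j * m + b) * x j)"

lemma compress_carrier[simp]: "compress d m W y x \<in> carrier_mat m m"
  by (simp add: compress_def)

lemma coord_norm_kron_coord: "coord_norm (d * m) (kron_coord m x z) = coord_norm d x * coord_norm m z"
proof -
  have "(\<Sum>p<d * m. (cmod (kron_coord m x z p))\<^sup>2) = (\<Sum>i<d. \<Sum>a<m. (cmod (x i))\<^sup>2 * (cmod (z a))\<^sup>2)"
    unfolding sum_lessThan_mult kron_coord_def by (intro sum.cong refl) (simp add: norm_mult power_mult_distrib)
  also have "\<dots> = (\<Sum>i<d. (cmod (x i))\<^sup>2) * (\<Sum>a<m. (cmod (z a))\<^sup>2)"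
    by (simp add: sum_product)
  finally show ?thesis unfolding coord_norm_def L2_set_def by (simp add: real_sqrt_mult)
qed

lemma sesq_form_compress:
  "sesq_form m (compress d m W y x) z' z = sesq_form (d * m) W (kron_coord m y z') (kron_coord m x z)"
proof -
  define G where "G = (\<lambda>i a j b. cnj (y i * z' a) * W $$ (i * m + a, j * m + b) * (x j * z b))"
  have "sesq_form (d * m) W (kron_coord m y z') (kron_coord m x z) = (\<Sum>i<d. \<Sum>a<m. \<Sum>j<d. \<Sum>b<m. G i a j b)"
    unfolding sesq_form_def sum_lessThan_mult kron_coord_def G_def by (intro sum.cong refl) simp
  also have "\<dots> = (\<Sum>a<m. \<Sum>i<d. \<Sum>j<d. \<Sum>b<m. G i a j b)" by (rule sum.swap)
  also have "\<dots> = (\<Sum>a<m. \<Sum>i<d. \<Sum>b<m. \<Sum>j<d. G i a j b)" by (intro sum.cong refl sum.swap)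
  also have "\<dots> = (\<Sum>a<m. \<Sum>b<m. \<Sum>i<d. \<Sum>j<d. G i a j b)" by (intro sum.cong refl sum.swap)
  also have "\<dots> = sesq_form m (compress d m W y x) z' z"
    unfolding sesq_form_def compress_def G_def
    by (intro sum.cong refl) (simp add: sum_distrib_left sum_distrib_right ac_simps)
  finally show ?thesis ..
qed

lemma contraction_compress:
  assumes W: "contraction (d * m) W" and x: "coord_norm d x = 1" and y: "coord_norm d y = 1"
  shows "contraction m (compress d m W y x)"
  unfolding contraction_def
proof (intro conjI allI)
  fix z z'
  have "cmod (sesq_form m (compress d m W y x) z' z) \<le>
      coord_norm (d * m) (kron_coord m x z) * coord_norm (d * m) (kron_coord m y z')"
    unfolding sesq_form_compress using W unfolding contraction_def by blast
  then show "cmod (sesq_form m (compress d m W y x) z' z) \<le> coord_norm m z * coord_norm m z'"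
    unfolding coord_norm_kron_coord x y by simp
qed simp

lemma mtrace_kron_mult_expand:
  assumes A: "A \<in> carrier_mat d d" and Y: "Y \<in> carrier_mat m m" and W: "W \<in> carrier_mat (d * m) (d * m)"
  shows "mtrace (kron A Y * W) =
    (\<Sum>a<m. \<Sum>b<m. \<Sum>j<d. \<Sum>i<d. A $$ (i, j) * Y $$ (a, b) * W $$ (j * m + b, i * m + a))"
proof -
  define G where "G = (\<lambda>i a j b. A $$ (i, j) * Y $$ (a, b) * W $$ (j * m + b, i * m + a))"
  have "mtrace (kron A Y * W) = (\<Sum>p<d * m. \<Sum>q<d * m. kron A Y $$ (p, q) * W $$ (q, p))"
    unfolding mtrace_def using A Y W
    by (intro sum.cong) (auto simp: index_mult_mat_sum[of _ "d * m" "d * m" _ "d * m"])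
  also have "\<dots> = (\<Sum>i<d. \<Sum>a<m. \<Sum>j<d. \<Sum>b<m. G i a j b)"
    unfolding sum_lessThan_mult G_def using A Y by (intro sum.cong refl) simp
  also have "\<dots> = (\<Sum>a<m. \<Sum>i<d. \<Sum>j<d. \<Sum>b<m. G i a j b)" by (rule sum.swap)
  also have "\<dots> = (\<Sum>a<m. \<Sum>i<d. \<Sum>b<m. \<Sum>j<d. G i a j b)" by (intro sum.cong refl sum.swap)
  also have "\<dots> = (\<Sum>a<m. \<Sum>b<m. \<Sum>i<d. \<Sum>j<d. G i a j b)" by (intro sum.cong refl sum.swap)
  also have "\<dots> = (\<Sum>a<m. \<Sum>b<m. \<Sum>j<d. \<Sum>i<d. G i a j b)" by (intro sum.cong refl sum.swap)
  finally show ?thesis unfolding G_def .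
qed

lemma mtrace_mult_compress:
  assumes Y: "Y \<in> carrier_mat m m"
  shows "mtrace (Y * compress d m W y x) =
    (\<Sum>a<m. \<Sum>b<m. \<Sum>j<d. \<Sum>i<d. Y $$ (a, b) * (cnj (y j) * W $$ (j * m + b, i * m + a) * x i))"
  unfolding mtrace_def using Y
  by (intro sum.cong refl) (auto simp: index_mult_mat_sum[of _ m m _ m] compress_def sum_distrib_left)

lemma mtrace_kron_mult:
  assumes A: "A \<in> carrier_mat d d" and Y: "Y \<in> carrier_mat m m" and W: "W \<in> carrier_mat (d * m) (d * m)"
    and Ad: "\<And>i j. i < d \<Longrightarrow> j < d \<Longrightarrow> A $$ (i, j) = (\<Sum>k<r. c k * x k i * cnj (y k j))"
  shows "mtrace (kron A Y * W) = (\<Sum>k<r. c k * mtrace (Y * compress d m W (y k) (x k)))"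
proof -
  define T where "T = (\<lambda>k a b j i. c k * (Y $$ (a, b) * (cnj (y k j) * W $$ (j * m + b, i * m + a) * x k i)))"
  have "(\<Sum>k<r. c k * mtrace (Y * compress d m W (y k) (x k))) = (\<Sum>k<r. \<Sum>a<m. \<Sum>b<m. \<Sum>j<d. \<Sum>i<d. T k a b j i)"
    unfolding mtrace_mult_compress[OF Y] T_def by (simp add: sum_distrib_left)
  also have "\<dots> = (\<Sum>a<m. \<Sum>k<r. \<Sum>b<m. \<Sum>j<d. \<Sum>i<d. T k a b j i)" by (rule sum.swap)
  also have "\<dots> = (\<Sum>a<m. \<Sum>b<m. \<Sum>k<r. \<Sum>j<d. \<Sum>i<d. T k a b j i)" by (intro sum.cong refl sum.swap)
  also have "\<dots> = (\<Sum>a<m. \<Sum>b<m. \<Sum>j<d. \<Sum>k<r. \<Sum>i<d. T k a b j i)" by (intro sum.cong refl sum.swap)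
  also have "\<dots> = (\<Sum>a<m. \<Sum>b<m. \<Sum>j<d. \<Sum>i<d. \<Sum>k<r. T k a b j i)" by (intro sum.cong refl sum.swap)
  also have "\<dots> = (\<Sum>a<m. \<Sum>b<m. \<Sum>j<d. \<Sum>i<d. A $$ (i, j) * Y $$ (a, b) * W $$ (j * m + b, i * m + a))"
    unfolding T_def using Ad by (intro sum.cong refl) (simp add: sum_distrib_left sum_distrib_right ac_simps)
  finally show ?thesis using mtrace_kron_mult_expand[OF A Y W] by simp
qed

section \<open>Trace-norm distance of tensor products\<close>

lemma trace_pairing_le_kron_density:
  assumes \<rho>: "density d \<rho>" and Y: "Y \<in> carrier_mat m m" and B: "trace_pairing_le m Y B"
  shows "trace_pairing_le (d * m) (kron \<rho> Y) B"
  unfolding trace_pairing_le_def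
proof (intro allI impI)
  fix W assume W: "contraction (d * m) W"
  obtain U lam where U: "unitary d U" and \<rho>d: "\<rho> = U * mat_diag d (\<lambda>k. complex_of_real (lam k)) * adj U"
    and lam_nonneg: "\<And>k. k < d \<Longrightarrow> lam k \<ge> 0" and lam_sum: "(\<Sum>k<d. lam k) = 1"
    using density_spectral[OF \<rho>] by blast
  define x where "x = (\<lambda>k i. U $$ (i, k))"
  have "mtrace (kron \<rho> Y * W) = (\<Sum>k<d. complex_of_real (lam k) * mtrace (Y * compress d m W (x k) (x k)))"
    using W unfolding contraction_def
    by (intro mtrace_kron_mult[OF density_carrier[OF \<rho>] Y])
      (auto simp: \<rho>d x_def index_mult_diag_adj[OF unitaryD(1)[OF U]] ac_simps)
  also have "cmod \<dots> \<le> (\<Sum>k<d. lam k * B)"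
  proof (rule order_trans[OF norm_sum sum_mono])
    fix k assume k: "k \<in> {..<d}"
    have "contraction m (compress d m W (x k) (x k))"
      using contraction_compress[OF W] coord_norm_unitary_col[OF U] k by (simp add: x_def)
    then have "cmod (mtrace (Y * compress d m W (x k) (x k))) \<le> B"
      using B unfolding trace_pairing_le_def by blast
    then show "cmod (complex_of_real (lam k) * mtrace (Y * compress d m W (x k) (x k))) \<le> lam k * B"
      using lam_nonneg k by (simp add: norm_mult mult_left_mono)
  qed
  also have "\<dots> = B" using lam_sum by (simp add: sum_distrib_right[symmetric])
  finally show "cmod (mtrace (kron \<rho> Y * W)) \<le> B" .
qed

definition entry_norm :: "nat \<Rightarrow> complex mat \<Rightarrow> real" where
  "entry_norm d E = (\<Sum>i<d. \<Sum>j<d. cmod (E $$ (i, j)))"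

lemma trace_pairing_le_kron:
  assumes E: "E \<in> carrier_mat d d" and Y: "Y \<in> carrier_mat m m" and B: "trace_pairing_le m Y B"
  shows "trace_pairing_le (d * m) (kron E Y) (entry_norm d E * B)"
  unfolding trace_pairing_le_def
proof (intro allI impI)
  fix W assume W: "contraction (d * m) W"
  define e where "e = (\<lambda>l i :: nat. if i = l then 1 else 0 :: complex)"
  define c where "c = (\<lambda>k. E $$ (k div d, k mod d))"
  have "E $$ (i, j) = (\<Sum>k<d * d. c k * e (k div d) i * cnj (e (k mod d) j))" if ij: "i < d" "j < d" for i j
  proof -
    have "(\<Sum>k<d * d. c k * e (k div d) i * cnj (e (k mod d) j))
        = (\<Sum>i'<d. \<Sum>j'<d. if i' = i \<and> j' = j then E $$ (i', j') else 0)"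
      unfolding sum_lessThan_mult c_def e_def by (intro sum.cong refl) auto
    also have "\<dots> = (\<Sum>i'<d. if i' = i then E $$ (i', j) else 0)"
      using ij by (intro sum.cong refl) auto
    finally show ?thesis using ij by simp
  qed
  then have "mtrace (kron E Y * W) = (\<Sum>k<d * d. c k * mtrace (Y * compress d m W (e (k mod d)) (e (k div d))))"
    using W unfolding contraction_def by (intro mtrace_kron_mult[OF E Y]) auto
  also have "cmod \<dots> \<le> (\<Sum>k<d * d. cmod (c k) * B)"
  proof (rule order_trans[OF norm_sum sum_mono])
    fix k assume "k \<in> {..<d * d}"
    then have "contraction m (compress d m W (e (k mod d)) (e (k div d)))"
      by (intro contraction_compress[OF W]) (simp_all add: e_def coord_norm_indicator)
    then have "cmod (mtrace (Y * compress d m W (e (k mod d)) (e (k div d)))) \<le> B"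
      using B unfolding trace_pairing_le_def by blast
    then show "cmod (c k * mtrace (Y * compress d m W (e (k mod d)) (e (k div d)))) \<le> cmod (c k) * B"
      by (simp add: norm_mult mult_left_mono)
  qed
  also have "\<dots> = entry_norm d E * B"
    unfolding entry_norm_def c_def sum_distrib_right[symmetric] sum_lessThan_mult by simp
  finally show "cmod (mtrace (kron E Y * W)) \<le> entry_norm d E * B" .
qed

lemma trace_pairing_le_tensor_list:
  "(\<forall>A\<in>set \<sigma>s. density d A) \<Longrightarrow> trace_pairing_le (d ^ length \<sigma>s) (tensor_list \<sigma>s) 1"
proof (induction \<sigma>s)
  case Nil
  show ?case unfolding trace_pairing_le_def
  proof (intro allI impI)
    fix W assume W: "contraction (d ^ length []) W"
    then have "W \<in> carrier_mat 1 1" unfolding contraction_def by simp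
    define e where "e = (\<lambda>i :: nat. if i = 0 then 1 else 0 :: complex)"
    have "mtrace (tensor_list [] * W) = sesq_form 1 W e e"
      using \<open>W \<in> carrier_mat 1 1\<close>
      unfolding tensor_list_def mtrace_def sesq_form_def e_def by (simp add: index_mult_mat_sum[of _ 1 1 _ 1])
    also have "cmod \<dots> \<le> coord_norm 1 e * coord_norm 1 e"
      using W unfolding contraction_def by simp
    finally show "cmod (mtrace (tensor_list [] * W)) \<le> 1"
      using coord_norm_indicator[of 0 1] unfolding e_def by simp
  qed
next
  case (Cons \<sigma> \<sigma>s)
  then have "tensor_list \<sigma>s \<in> carrier_mat (d ^ length \<sigma>s) (d ^ length \<sigma>s)"
    by (intro tensor_list_carrier) (auto simp: density_carrier)
  with Cons show ?case
    unfolding tensor_list_Cons by (simp add: trace_pairing_le_kron_density)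
qed

lemma trace_pairing_le_tensor_list_diff:
  "length \<rho>s = length \<sigma>s \<Longrightarrow> (\<forall>A\<in>set \<rho>s. density d A) \<Longrightarrow> (\<forall>A\<in>set \<sigma>s. density d A) \<Longrightarrow>
   trace_pairing_le (d ^ length \<rho>s) (tensor_list \<rho>s - tensor_list \<sigma>s)
     (\<Sum>t<length \<rho>s. entry_norm d (\<rho>s ! t - \<sigma>s ! t))"
proof (induction \<rho>s arbitrary: \<sigma>s)
  case Nil
  then have "tensor_list [] - tensor_list \<sigma>s = 0\<^sub>m 1 1"
    unfolding tensor_list_def by (intro eq_matI) auto
  then show ?case unfolding trace_pairing_le_def contraction_def mtrace_def by auto
next
  case (Cons \<rho> \<rho>s)
  obtain \<sigma> \<sigma>s' where \<sigma>s: "\<sigma>s = \<sigma> # \<sigma>s'" using Cons.prems(1) by (cases \<sigma>s) auto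
  have \<rho>: "density d \<rho>" and \<rho>s: "\<forall>A\<in>set \<rho>s. density d A"
    and \<sigma>: "density d \<sigma>" and \<sigma>s': "\<forall>A\<in>set \<sigma>s'. density d A" and len: "length \<rho>s = length \<sigma>s'"
    using Cons.prems unfolding \<sigma>s by auto
  define m where "m = d ^ length \<rho>s"
  have R: "tensor_list \<rho>s \<in> carrier_mat m m"
    unfolding m_def using \<rho>s by (auto intro!: tensor_list_carrier simp: density_carrier)
  have S: "tensor_list \<sigma>s' \<in> carrier_mat m m"
    unfolding m_def len using \<sigma>s' by (auto intro!: tensor_list_carrier simp: density_carrier)
  have "trace_pairing_le (d * m) (kron \<rho> (tensor_list \<rho>s - tensor_list \<sigma>s'))
      (\<Sum>t<length \<rho>s. entry_norm d (\<rho>s ! t - \<sigma>s' ! t))"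
    using Cons.IH[OF len \<rho>s \<sigma>s'] R S unfolding m_def by (intro trace_pairing_le_kron_density[OF \<rho>]) auto
  moreover have "trace_pairing_le (d * m) (kron (\<rho> - \<sigma>) (tensor_list \<sigma>s')) (entry_norm d (\<rho> - \<sigma>) * 1)"
    using trace_pairing_le_kron[OF minus_carrier_mat[OF density_carrier[OF \<sigma>]] S]
      trace_pairing_le_tensor_list[OF \<sigma>s', folded len] unfolding m_def by blast
  moreover have "kron \<rho> (tensor_list \<rho>s - tensor_list \<sigma>s') \<in> carrier_mat (d * m) (d * m)"
    "kron (\<rho> - \<sigma>) (tensor_list \<sigma>s') \<in> carrier_mat (d * m) (d * m)"
    using R S \<rho> \<sigma> by (auto intro!: kron_carrier minus_carrier_mat simp: density_carrier)
  ultimately have "trace_pairing_le (d * m) (tensor_list (\<rho> # \<rho>s) - tensor_list \<sigma>s)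
      ((\<Sum>t<length \<rho>s. entry_norm d (\<rho>s ! t - \<sigma>s' ! t)) + entry_norm d (\<rho> - \<sigma>) * 1)"
    unfolding \<sigma>s tensor_list_Cons kron_diff[OF density_carrier[OF \<rho>] density_carrier[OF \<sigma>] R S]
    by (intro trace_pairing_le_add)
  then show ?case
    unfolding \<sigma>s m_def length_Cons sum.lessThan_Suc_shift by (simp add: add.commute)
qed

lemma trace_norm_tensor_list_diff:
  assumes len: "length \<rho>s = length \<sigma>s" and \<rho>s: "\<forall>A\<in>set \<rho>s. density d A" and \<sigma>s: "\<forall>A\<in>set \<sigma>s. density d A"
  shows "trace_norm (tensor_list \<rho>s - tensor_list \<sigma>s) \<le> (\<Sum>t<length \<rho>s. entry_norm d (\<rho>s ! t - \<sigma>s ! t))"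
proof (rule trace_norm_le_if_trace_pairing_le)
  let ?n = "d ^ length \<rho>s"
  have R: "tensor_list \<rho>s \<in> carrier_mat ?n ?n"
    using \<rho>s by (auto intro!: tensor_list_carrier simp: density_carrier)
  have S: "tensor_list \<sigma>s \<in> carrier_mat ?n ?n"
    unfolding len using \<sigma>s by (auto intro!: tensor_list_carrier simp: density_carrier)
  show "tensor_list \<rho>s - tensor_list \<sigma>s \<in> carrier_mat ?n ?n" using minus_carrier_mat[OF S] .
  show "adj (tensor_list \<rho>s - tensor_list \<sigma>s) = tensor_list \<rho>s - tensor_list \<sigma>s"
  proof -
    have "adj (tensor_list \<rho>s) = tensor_list \<rho>s" "adj (tensor_list \<sigma>s) = tensor_list \<sigma>s"
      using \<rho>s \<sigma>s by (auto intro!: adj_tensor_list[of _ d] simp: density_carrier density_hermitian)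
    then show ?thesis using adj_minus[OF R S] by simp
  qed
  show "trace_pairing_le ?n (tensor_list \<rho>s - tensor_list \<sigma>s) (\<Sum>t<length \<rho>s. entry_norm d (\<rho>s ! t - \<sigma>s ! t))"
    by (rule trace_pairing_le_tensor_list_diff[OF len \<rho>s \<sigma>s])
qed

section \<open>Entropy bounds\<close>

lemma density_char_poly_roots:
  assumes \<rho>: "density d \<rho>"
  obtains lam where "\<And>k. k < d \<Longrightarrow> 0 \<le> lam k \<and> lam k \<le> 1"
    "{e. poly (char_poly \<rho>) e = 0} \<subseteq> (\<lambda>k. complex_of_real (lam k)) ` {..<d}"
proof -
  obtain U lam where U: "unitary d U" and \<rho>d: "\<rho> = U * mat_diag d (\<lambda>k. complex_of_real (lam k)) * adj U"
    and lam_nonneg: "\<And>k. k < d \<Longrightarrow> lam k \<ge> 0" and lam_sum: "(\<Sum>k<d. lam k) = 1"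
    using density_spectral[OF \<rho>] by blast
  have "lam k \<le> 1" if "k < d" for k
    using member_le_sum[of k "{..<d}" lam] lam_nonneg lam_sum that by simp
  moreover have "{e. poly (char_poly \<rho>) e = 0} \<subseteq> (\<lambda>k. complex_of_real (lam k)) ` {..<d}"
  proof
    define D where "D = mat_diag d (\<lambda>k. complex_of_real (lam k))"
    have "similar_mat_wit \<rho> D U (adj U)"
      unfolding similar_mat_wit_def Let_def D_def using unitaryD[OF U] \<rho>d by auto
    then have "similar_mat \<rho> D" unfolding similar_mat_def by blast
    then have cp: "char_poly \<rho> = (\<Prod>a\<leftarrow>diag_mat D. [:- a, 1:])"
      unfolding char_poly_similar[OF \<open>similar_mat \<rho> D\<close>]
      by (intro char_poly_upper_triangular[of D d]) (auto simp: D_def upper_triangular_def)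
    fix e assume "e \<in> {e. poly (char_poly \<rho>) e = 0}"
    then have "0 \<in> set (map (\<lambda>a. poly [:- a, 1:] e) (diag_mat D))"
      unfolding cp poly_prod_list by (simp add: prod_list_zero_iff)
    then obtain k where "k < d" "e = D $$ (k, k)" unfolding diag_mat_def D_def by auto
    then show "e \<in> (\<lambda>k. complex_of_real (lam k)) ` {..<d}" unfolding D_def by auto
  qed
  ultimately show ?thesis using that lam_nonneg by blast
qed

lemma x_ln_x_bounds:
  fixes x :: real
  assumes "0 \<le> x" "x \<le> 1"
  shows "x * ln x \<le> 0" "-1 \<le> x * ln x"
proof -
  show "x * ln x \<le> 0"
    using assms by (cases "x = 0") (auto intro: mult_nonneg_nonpos)
  show "-1 \<le> x * ln x"
  proof (cases "x = 0")
    case False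
    with assms have "ln (1 / x) \<le> 1 / x - 1" by (intro ln_le_minus_one) auto
    with False assms have "x * (- ln x) \<le> x * (1 / x - 1)" by (intro mult_left_mono) (auto simp: ln_div)
    with False assms show ?thesis by (simp add: algebra_simps)
  qed simp
qed

lemma vn_entropy_bounds:
  assumes \<rho>: "density d \<rho>"
  shows "0 \<le> vn_entropy \<rho>" "vn_entropy \<rho> \<le> real d * real d"
proof -
  obtain lam where lam: "\<And>k. k < d \<Longrightarrow> 0 \<le> lam k \<and> lam k \<le> 1"
    and roots: "{e. poly (char_poly \<rho>) e = 0} \<subseteq> (\<lambda>k. complex_of_real (lam k)) ` {..<d}"
    using density_char_poly_roots[OF \<rho>] by blast
  define R where "R = {e. poly (char_poly \<rho>) e = 0}"
  have deg: "degree (char_poly \<rho>) = d" and nz: "char_poly \<rho> \<noteq> 0"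
    using degree_monic_char_poly[OF density_carrier[OF \<rho>]] by auto
  have Re01: "0 \<le> Re e \<and> Re e \<le> 1" if "e \<in> R" for e
    using roots that lam unfolding R_def by auto
  have "real (Polynomial.order e (char_poly \<rho>)) * (Re e * ln (Re e)) \<le> 0" if "e \<in> R" for e
    using x_ln_x_bounds(1) Re01[OF that] by (simp add: mult_nonneg_nonpos)
  then show "0 \<le> vn_entropy \<rho>"
    unfolding vn_entropy_def R_def[symmetric] by (simp add: sum_nonpos)
  have "- real d \<le> real (Polynomial.order e (char_poly \<rho>)) * (Re e * ln (Re e))" if "e \<in> R" for e
  proof -
    have "real (Polynomial.order e (char_poly \<rho>)) \<le> real d" using order_degree[OF nz, of e] deg by simp
    moreover have "- real (Polynomial.order e (char_poly \<rho>)) \<le> real (Polynomial.order e (char_poly \<rho>)) * (Re e * ln (Re e))"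
      using mult_left_mono[OF x_ln_x_bounds(2), of "Re e" "real (Polynomial.order e (char_poly \<rho>))"] Re01[OF that]
      by simp
    ultimately show ?thesis by linarith
  qed
  then have "vn_entropy \<rho> \<le> (\<Sum>e\<in>R. real d)"
    unfolding vn_entropy_def R_def[symmetric] sum_negf[symmetric] by (intro sum_mono) force
  also have "\<dots> \<le> real d * real d"
    using card_poly_roots_bound[OF nz] deg unfolding R_def by (simp add: mult_right_mono)
  finally show "vn_entropy \<rho> \<le> real d * real d" .
qed

definition mixture :: "nat \<Rightarrow> nat set \<Rightarrow> (nat \<Rightarrow> real) \<Rightarrow> (nat \<Rightarrow> complex mat) \<Rightarrow> complex mat" where
  "mixture d X P \<rho> = mat d d (\<lambda>(i, j). \<Sum>x\<in>X. complex_of_real (P x) * \<rho> x $$ (i, j))"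

lemma sesq_form_mixture:
  "sesq_form d (mixture d X P \<rho>) y x = (\<Sum>z\<in>X. complex_of_real (P z) * sesq_form d (\<rho> z) y x)"
  unfolding sesq_form_def mixture_def by (simp add: sum_distrib_left sum_distrib_right ac_simps sum.swap[of _ X])

lemma mtrace_mixture:
  assumes "\<forall>x\<in>X. \<rho> x \<in> carrier_mat d d"
  shows "mtrace (mixture d X P \<rho>) = (\<Sum>x\<in>X. complex_of_real (P x) * mtrace (\<rho> x))"
proof -
  have "mtrace (mixture d X P \<rho>) = (\<Sum>x\<in>X. \<Sum>i<d. complex_of_real (P x) * \<rho> x $$ (i, i))"
    unfolding mtrace_def mixture_def by (simp add: sum.swap[of _ X])
  also have "\<dots> = (\<Sum>x\<in>X. complex_of_real (P x) * mtrace (\<rho> x))"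
    using assms unfolding mtrace_def by (intro sum.cong refl) (auto simp: sum_distrib_left)
  finally show ?thesis .
qed

lemma density_mixture:
  assumes ch: "cq_channel d X \<rho>" and P: "is_pmf_on X P"
  shows "density d (mixture d X P \<rho>)"
proof -
  have dens: "\<And>x. x \<in> X \<Longrightarrow> density d (\<rho> x)" using ch unfolding cq_channel_def by auto
  have P_nonneg: "\<And>x. x \<in> X \<Longrightarrow> P x \<ge> 0" and P_sum: "(\<Sum>x\<in>X. P x) = 1"
    using P unfolding is_pmf_on_def by auto
  define M where "M = mixture d X P \<rho>"
  have Mc: "M \<in> carrier_mat d d" unfolding M_def mixture_def by auto
  have "adj M = M"
  proof (rule eq_matI)
    fix i j assume "i < dim_row M" "j < dim_col M"
    then have ij: "i < d" "j < d" using Mc by auto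
    have "cnj (\<rho> x $$ (j, i)) = \<rho> x $$ (i, j)" if "x \<in> X" for x
      using hermitian_index_cnj[OF density_carrier[OF dens[OF that]] density_hermitian[OF dens[OF that]] ij]
      by simp
    then show "adj M $$ (i, j) = M $$ (i, j)" using ij unfolding M_def mixture_def by simp
  qed (use Mc in auto)
  moreover have "0 \<le> Re (sesq_form d M v v)" for v
    unfolding M_def sesq_form_mixture using P_nonneg dens unfolding density_def psd_iff_sesq_form
    by (auto simp: Re_sum intro!: sum_nonneg)
  moreover have "mtrace M = 1"
    unfolding M_def using mtrace_mixture[of X \<rho> d P] dens P_sum
    by (simp add: density_carrier density_def flip: of_real_sum)
  ultimately show ?thesis unfolding density_def psd_iff_sesq_form M_def[symmetric] using Mc by auto
qed

lemma holevo_lower_bound: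
  assumes ch: "cq_channel d X \<rho>" and P: "is_pmf_on X P"
  shows "- (real d * real d) \<le> holevo d X P \<rho>"
proof -
  have "(\<Sum>x\<in>X. P x * vn_entropy (\<rho> x)) \<le> (\<Sum>x\<in>X. P x * (real d * real d))"
    using P ch vn_entropy_bounds(2) unfolding is_pmf_on_def cq_channel_def
    by (intro sum_mono mult_left_mono) auto
  also have "\<dots> = real d * real d"
    using P unfolding is_pmf_on_def by (simp add: sum_distrib_right[symmetric])
  finally show ?thesis
    using vn_entropy_bounds(1)[OF density_mixture[OF ch P]] unfolding holevo_def mixture_def by simp
qed

section \<open>A finite net of channels\<close>

lemma density_index_le_1:
  assumes \<rho>: "density d \<rho>" and ij: "i < d" "j < d"
  shows "cmod (\<rho> $$ (i, j)) \<le> 1"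
proof -
  obtain U lam where U: "unitary d U" and \<rho>d: "\<rho> = U * mat_diag d (\<lambda>k. complex_of_real (lam k)) * adj U"
    and lam_nonneg: "\<And>k. k < d \<Longrightarrow> lam k \<ge> 0" and lam_sum: "(\<Sum>k<d. lam k) = 1"
    using density_spectral[OF \<rho>] by blast
  have U_le: "cmod (U $$ (l, k)) \<le> 1" if "l < d" "k < d" for l k
  proof -
    have "(cmod (U $$ (l, k)))\<^sup>2 \<le> (\<Sum>i<d. (cmod (U $$ (i, k)))\<^sup>2)"
      using that by (intro member_le_sum) auto
    also have "\<dots> = 1"
      using coord_norm_unitary_col[OF U \<open>k < d\<close>] unfolding coord_norm_def L2_set_def by simp
    finally show ?thesis by (simp add: power_le_one_iff)
  qed
  have "cmod (\<rho> $$ (i, j)) \<le> (\<Sum>k<d. cmod (U $$ (i, k) * complex_of_real (lam k) * cnj (U $$ (j, k))))"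
    unfolding \<rho>d index_mult_diag_adj[OF unitaryD(1)[OF U] ij] by (rule norm_sum)
  also have "\<dots> \<le> (\<Sum>k<d. lam k)"
  proof (rule sum_mono)
    fix k assume "k \<in> {..<d}"
    then have "cmod (U $$ (i, k)) * lam k * cmod (U $$ (j, k)) \<le> 1 * lam k * 1"
      using U_le ij lam_nonneg by (intro mult_mono) auto
    then show "cmod (U $$ (i, k) * complex_of_real (lam k) * cnj (U $$ (j, k))) \<le> lam k"
      using lam_nonneg \<open>k \<in> {..<d}\<close> by (simp add: norm_mult)
  qed
  finally show ?thesis using lam_sum by simp
qed

text \<open>A Hermitian matrix is determined by the real parts of its upper triangle and the imaginary
  parts of its strict upper triangle; \<open>entry_code L A\<close> rounds these to the grid \<open>\<int>/L\<close>.\<close>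
definition entry_code :: "real \<Rightarrow> complex mat \<Rightarrow> nat \<times> nat \<Rightarrow> int" where
  "entry_code L A = (\<lambda>(i, j). if i \<le> j then \<lfloor>Re (A $$ (i, j)) * L\<rfloor> else \<lfloor>Im (A $$ (j, i)) * L\<rfloor>)"

lemma floor_mult_in_range:
  fixes t :: real
  assumes "\<bar>t\<bar> \<le> 1"
  shows "\<lfloor>t * real L\<rfloor> \<in> {- int L..int L}"
proof -
  have "-1 * real L \<le> t * real L" "t * real L \<le> 1 * real L"
    using assms by (intro mult_right_mono; simp add: abs_le_iff)+
  then show ?thesis by (auto simp: le_floor_iff floor_le_iff)
qed

lemma entry_code_range:
  assumes "density d A" "i < d" "j < d"
  shows "entry_code (real L) A (i, j) \<in> {- int L..int L}"
proof -
  have "cmod (A $$ (i, j)) \<le> 1" "cmod (A $$ (j, i)) \<le> 1"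
    using density_index_le_1 assms by auto
  then have "\<bar>Re (A $$ (i, j))\<bar> \<le> 1" "\<bar>Im (A $$ (j, i))\<bar> \<le> 1"
    using abs_Re_le_cmod abs_Im_le_cmod order_trans by blast+
  then show ?thesis unfolding entry_code_def
    using floor_mult_in_range[of "Re (A $$ (i, j))" L] floor_mult_in_range[of "Im (A $$ (j, i))" L] by auto
qed

lemma floor_mult_eq_imp_dist_le:
  fixes s t L :: real
  assumes "L > 0" "\<lfloor>s * L\<rfloor> = \<lfloor>t * L\<rfloor>"
  shows "\<bar>s - t\<bar> \<le> 1 / L"
proof -
  have "\<bar>s * L - t * L\<bar> < 1" using assms(2) by (smt (verit, best) floor_eq_iff)
  then have "\<bar>s - t\<bar> * L < 1" using assms(1) by (simp add: abs_mult left_diff_distrib[symmetric])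
  then show ?thesis using assms(1) by (simp add: field_simps)
qed

lemma entry_norm_diff_le_if_entry_code_eq:
  assumes A: "density d A" and B: "density d B" and L: "L > 0"
    and code: "\<And>i j. i < d \<Longrightarrow> j < d \<Longrightarrow> entry_code L A (i, j) = entry_code L B (i, j)"
  shows "entry_norm d (A - B) \<le> real d * real d * (2 / L)"
proof -
  have conj_sym: "M $$ (a, b) = cnj (M $$ (b, a))" if "density d M" "a < d" "b < d" for M a b
    using hermitian_index_cnj[OF density_carrier density_hermitian] that by blast
  have upper: "cmod (A $$ (a, b) - B $$ (a, b)) \<le> 2 / L" if ab: "a < d" "b < d" "a \<le> b" for a b
  proof -
    have "\<bar>Re (A $$ (a, b)) - Re (B $$ (a, b))\<bar> \<le> 1 / L"
      using floor_mult_eq_imp_dist_le[OF L] code[OF ab(1,2)] ab(3) unfolding entry_code_def by auto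
    moreover have "\<bar>Im (A $$ (a, b)) - Im (B $$ (a, b))\<bar> \<le> 1 / L"
    proof (cases "a = b")
      case True
      have "Im (A $$ (a, a)) = 0" "Im (B $$ (a, a)) = 0"
        using arg_cong[OF conj_sym[OF A ab(1,1)], of Im] arg_cong[OF conj_sym[OF B ab(1,1)], of Im] by simp_all
      then show ?thesis using True L by simp
    next
      case False
      then show ?thesis using floor_mult_eq_imp_dist_le[OF L] code[OF ab(2,1)] ab(3)
        unfolding entry_code_def by auto
    qed
    ultimately show ?thesis using cmod_le[of "A $$ (a, b) - B $$ (a, b)"] by simp
  qed
  have "cmod ((A - B) $$ (a, b)) \<le> 2 / L" if ab: "a < d" "b < d" for a b
  proof (cases "a \<le> b")
    case False
    have "cmod (A $$ (a, b) - B $$ (a, b)) = cmod (A $$ (b, a) - B $$ (b, a))"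
      using conj_sym[OF A ab] conj_sym[OF B ab] by (metis complex_cnj_diff complex_mod_cnj)
    then show ?thesis using upper[of b a] ab False density_carrier[OF A] density_carrier[OF B] by auto
  qed (use upper ab density_carrier[OF A] density_carrier[OF B] in auto)
  then have "entry_norm d (A - B) \<le> (\<Sum>i<d. \<Sum>j<d. 2 / L)"
    unfolding entry_norm_def by (intro sum_mono) auto
  then show ?thesis by simp
qed

lemma finite_representatives:
  assumes "key ` \<Theta> \<subseteq> R" "finite R"
  obtains N \<sigma> where "N \<le> card R" "\<forall>k<N. \<sigma> k \<in> \<Theta>" "\<forall>\<rho>\<in>\<Theta>. \<exists>k<N. key (\<sigma> k) = key \<rho>"
proof -
  have fin: "finite (key ` \<Theta>)" using assms finite_subset by blast
  obtain h where h: "bij_betw h {..<card (key ` \<Theta>)} (key ` \<Theta>)"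
    using ex_bij_betw_nat_finite[OF fin] atLeast0LessThan by auto
  define \<sigma> where "\<sigma> = (\<lambda>k. SOME \<rho>. \<rho> \<in> \<Theta> \<and> key \<rho> = h k)"
  have \<sigma>: "\<sigma> k \<in> \<Theta> \<and> key (\<sigma> k) = h k" if "k < card (key ` \<Theta>)" for k
  proof -
    have "h k \<in> key ` \<Theta>" using h that unfolding bij_betw_def by auto
    then have "\<exists>\<rho>. \<rho> \<in> \<Theta> \<and> key \<rho> = h k" by auto
    then show ?thesis unfolding \<sigma>_def by (rule someI_ex)
  qed
  show ?thesis
  proof (rule that)
    show "card (key ` \<Theta>) \<le> card R" using assms by (rule card_mono[rotated])
    show "\<forall>k<card (key ` \<Theta>). \<sigma> k \<in> \<Theta>" using \<sigma> by blast
    show "\<forall>\<rho>\<in>\<Theta>. \<exists>k<card (key ` \<Theta>). key (\<sigma> k) = key \<rho>"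
    proof
      fix \<rho> assume "\<rho> \<in> \<Theta>"
      then obtain k where "k < card (key ` \<Theta>)" "h k = key \<rho>"
        using h unfolding bij_betw_def by (metis imageE image_eqI lessThan_iff)
      then show "\<exists>k<card (key ` \<Theta>). key (\<sigma> k) = key \<rho>" using \<sigma> by metis
    qed
  qed
qed

lemma grid_size_bound:
  assumes "d \<ge> 1" "T \<ge> 1"
  shows "real ((2 * (2 * d\<^sup>2 * T ^ 6) + 1) ^ (c * d * d))
    \<le> ((5 * real d ^ 2) ^ (d ^ 2)) ^ c * real T ^ (6 * c * d\<^sup>2)"
proof -
  have "2 * (2 * d\<^sup>2 * T ^ 6) + 1 \<le> 5 * d\<^sup>2 * T ^ 6" using assms by simp
  then have "(2 * (2 * d\<^sup>2 * T ^ 6) + 1) ^ (c * d * d) \<le> (5 * d\<^sup>2 * T ^ 6) ^ (c * d * d)"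
    by (rule power_mono) simp
  then have "real ((2 * (2 * d\<^sup>2 * T ^ 6) + 1) ^ (c * d * d)) \<le> real ((5 * d\<^sup>2 * T ^ 6) ^ (c * d * d))"
    by (simp only: of_nat_le_iff)
  also have "\<dots> = (5 * real d ^ 2 * real T ^ 6) ^ (c * d\<^sup>2)"
    by (simp add: power2_eq_square mult.assoc)
  also have "\<dots> = ((5 * real d ^ 2) ^ (d ^ 2)) ^ c * real T ^ (6 * c * d\<^sup>2)"
    by (simp add: power_mult_distrib flip: power_mult) (simp add: ac_simps)
  finally show ?thesis .
qed

definition channel_code :: "real \<Rightarrow> nat \<Rightarrow> nat set \<Rightarrow> (nat \<Rightarrow> complex mat) \<Rightarrow> nat \<times> nat \<times> nat \<Rightarrow> int" where
  "channel_code L d X \<rho> = restrict (\<lambda>(x, ij). entry_code L (\<rho> x) ij) (X \<times> {..<d} \<times> {..<d})"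

lemma channel_code_range:
  assumes "cq_channel d X \<rho>"
  shows "channel_code (real L) d X \<rho> \<in> (\<Pi>\<^sub>E z\<in>X \<times> {..<d} \<times> {..<d}. {- int L..int L})"
  using assms entry_code_range unfolding channel_code_def restrict_PiE_iff cq_channel_def by auto

lemma card_code_space:
  assumes "finite X"
  shows "card (\<Pi>\<^sub>E z\<in>X \<times> {..<d} \<times> {..<d}. {- int L..int L}) = (2 * L + 1) ^ (card X * d * d)"
proof -
  have "nat (2 * int L + 1) = 2 * L + 1" by linarith
  then show ?thesis using assms by (simp add: card_PiE card_cartesian_product mult.assoc)
qed

lemma entry_norm_diff_le_if_channel_code_eq:
  assumes "cq_channel d X \<rho>" "cq_channel d X \<sigma>" "L > 0"
    and code: "channel_code L d X \<rho> = channel_code L d X \<sigma>" and x: "x \<in> X"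
  shows "entry_norm d (\<rho> x - \<sigma> x) \<le> real d * real d * (2 / L)"
proof (rule entry_norm_diff_le_if_entry_code_eq)
  fix i j assume "i < d" "j < d"
  then show "entry_code L (\<rho> x) (i, j) = entry_code L (\<sigma> x) (i, j)"
    using fun_cong[OF code, of "(x, i, j)"] x unfolding channel_code_def by simp
qed (use assms in \<open>auto simp: cq_channel_def\<close>)

lemma channel_net:
  assumes d: "d \<ge> 1" and X: "finite X" and ch: "\<forall>\<rho>\<in>\<Theta>. cq_channel d X \<rho>" and T: "T \<ge> 1"
  obtains N \<sigma> where "\<forall>k<N. \<sigma> k \<in> \<Theta>"
    "real N \<le> ((5 * real d ^ 2) ^ (d ^ 2)) ^ card X * real T ^ (6 * card X * d\<^sup>2)"
    "\<forall>\<rho>\<in>\<Theta>. \<exists>k<N. \<forall>x\<in>X. entry_norm d (\<rho> x - \<sigma> k x) \<le> 1 / real T ^ 6"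
proof -
  define L :: nat where "L = 2 * d\<^sup>2 * T ^ 6"
  define R where "R = (\<Pi>\<^sub>E z\<in>X \<times> {..<d} \<times> {..<d}. {- int L..int L})"
  have "channel_code (real L) d X ` \<Theta> \<subseteq> R" unfolding R_def using ch channel_code_range by blast
  moreover have "finite R" unfolding R_def using X by (intro finite_PiE) auto
  ultimately obtain N \<sigma> where N: "N \<le> card R" and \<sigma>: "\<forall>k<N. \<sigma> k \<in> \<Theta>"
    and rep: "\<forall>\<rho>\<in>\<Theta>. \<exists>k<N. channel_code (real L) d X (\<sigma> k) = channel_code (real L) d X \<rho>"
    by (rule finite_representatives)
  have "real N \<le> real ((2 * L + 1) ^ (card X * d * d))"
    using N card_code_space[OF X] unfolding R_def by (simp only: of_nat_le_iff)
  also have "\<dots> \<le> ((5 * real d ^ 2) ^ (d ^ 2)) ^ card X * real T ^ (6 * card X * d\<^sup>2)"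
    unfolding L_def by (rule grid_size_bound[OF d T])
  finally have "real N \<le> ((5 * real d ^ 2) ^ (d ^ 2)) ^ card X * real T ^ (6 * card X * d\<^sup>2)" .
  moreover have "\<exists>k<N. \<forall>x\<in>X. entry_norm d (\<rho> x - \<sigma> k x) \<le> 1 / real T ^ 6" if \<rho>: "\<rho> \<in> \<Theta>" for \<rho>
  proof -
    obtain k where k: "k < N" and code: "channel_code (real L) d X \<rho> = channel_code (real L) d X (\<sigma> k)"
      using rep \<rho> by metis
    have "real L > 0" using d T by (simp add: L_def)
    then have "entry_norm d (\<rho> x - \<sigma> k x) \<le> real d * real d * (2 / real L)" if "x \<in> X" for x
      using entry_norm_diff_le_if_channel_code_eq[OF _ _ _ code that] ch \<rho> \<sigma> k by blast
    moreover have "real d * real d * (2 / real L) = 1 / real T ^ 6"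
      unfolding L_def using d T by (simp add: power2_eq_square field_simps)
    ultimately show ?thesis using k by auto
  qed
  ultimately show ?thesis by (intro that[OF \<sigma>]) auto
qed

lemma trace_norm_channel_word_diff:
  assumes \<rho>: "cq_channel d X \<rho>" and \<sigma>: "cq_channel d X \<sigma>"
    and close: "\<forall>x\<in>X. entry_norm d (\<rho> x - \<sigma> x) \<le> \<epsilon>" and xs: "set xs \<subseteq> X"
  shows "trace_norm (channel_word \<rho> xs - channel_word \<sigma> xs) \<le> real (length xs) * \<epsilon>"
proof -
  have "trace_norm (channel_word \<rho> xs - channel_word \<sigma> xs)
      \<le> (\<Sum>t<length (map \<rho> xs). entry_norm d (map \<rho> xs ! t - map \<sigma> xs ! t))"
    unfolding channel_word_def using \<rho> \<sigma> xs unfolding cq_channel_def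
    by (intro trace_norm_tensor_list_diff) auto
  also have "\<dots> \<le> (\<Sum>t<length (map \<rho> xs). \<epsilon>)"
    using close xs by (intro sum_mono) (auto simp: subset_iff)
  finally show ?thesis by simp
qed

lemma INF_holevo_le:
  assumes ch: "\<forall>\<rho>\<in>\<Theta>. cq_channel d X \<rho>" and P: "is_pmf_on X P" and \<sigma>: "\<sigma> \<in> \<Theta>"
  shows "(INF \<rho>\<in>\<Theta>. holevo d X P \<rho>) \<le> holevo d X P \<sigma>"
proof (rule cInf_lower)
  show "holevo d X P \<sigma> \<in> holevo d X P ` \<Theta>" using \<sigma> by blast
  show "bdd_below (holevo d X P ` \<Theta>)"
    using holevo_lower_bound[OF _ P] ch by (intro bdd_belowI[of _ "- (real d * real d)"]) auto
qed

lemma compound_channel_net: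
  assumes d: "d \<ge> 1" and X: "finite X" and ch: "\<forall>\<rho>\<in>\<Theta>. cq_channel d X \<rho>" and T: "T \<ge> 1"
  shows "\<exists>(N::nat) (\<sigma>::nat \<Rightarrow> nat \<Rightarrow> complex mat).
     (\<forall>k<N. cq_channel d X (\<sigma> k)) \<and>
     real N \<le> ((5 * real d ^ 2) ^ (d ^ 2)) ^ card X * real T ^ (6 * card X * d\<^sup>2) \<and>
     (\<forall>\<rho>\<in>\<Theta>. \<exists>k<N. \<forall>xs. length xs = T \<and> set xs \<subseteq> X \<longrightarrow>
         trace_norm (channel_word \<rho> xs - channel_word (\<sigma> k) xs) \<le> real T powr (-5)) \<and>
     (\<forall>P. is_pmf_on X P \<longrightarrow> (\<forall>k<N.
         holevo d X P (\<sigma> k) \<ge> (INF \<rho>\<in>\<Theta>. holevo d X P \<rho>)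
           - 2 * real T powr (-6) * ln (real T ^ 6 * real d)))"
proof -
  obtain N \<sigma> where \<sigma>: "\<forall>k<N. \<sigma> k \<in> \<Theta>"
    and N: "real N \<le> ((5 * real d ^ 2) ^ (d ^ 2)) ^ card X * real T ^ (6 * card X * d\<^sup>2)"
    and close: "\<forall>\<rho>\<in>\<Theta>. \<exists>k<N. \<forall>x\<in>X. entry_norm d (\<rho> x - \<sigma> k x) \<le> 1 / real T ^ 6"
    by (rule channel_net[OF d X ch T])
  have "\<exists>k<N. \<forall>xs. length xs = T \<and> set xs \<subseteq> X \<longrightarrow>
      trace_norm (channel_word \<rho> xs - channel_word (\<sigma> k) xs) \<le> real T powr (-5)" if \<rho>: "\<rho> \<in> \<Theta>" for \<rho>
  proof -
    obtain k where k: "k < N" "\<forall>x\<in>X. entry_norm d (\<rho> x - \<sigma> k x) \<le> 1 / real T ^ 6"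
      using close \<rho> by blast
    have T_pow: "real T * (1 / real T ^ 6) = real T powr (-5)"
      using T by (simp add: powr_minus powr_realpow field_simps power_eq_if)
    have ch_k: "cq_channel d X \<rho>" "cq_channel d X (\<sigma> k)" using ch \<rho> \<sigma> k(1) by auto
    show ?thesis
    proof (intro exI[of _ k] conjI allI impI k(1))
      fix xs assume xs: "length xs = T \<and> set xs \<subseteq> X"
      then have "trace_norm (channel_word \<rho> xs - channel_word (\<sigma> k) xs) \<le> real T * (1 / real T ^ 6)"
        using trace_norm_channel_word_diff[OF ch_k k(2)] by auto
      then show "trace_norm (channel_word \<rho> xs - channel_word (\<sigma> k) xs) \<le> real T powr (-5)"
        unfolding T_pow .
    qed
  qed
  moreover have "(INF \<rho>\<in>\<Theta>. holevo d X P \<rho>) - 2 * real T powr (-6) * ln (real T ^ 6 * real d)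
      \<le> holevo d X P (\<sigma> k)" if P: "is_pmf_on X P" and k: "k < N" for P k
  proof -
    have "1 \<le> real T ^ 6 * real d" using T d mult_mono[of 1 "real T ^ 6" 1 "real d"] by simp
    then have "0 \<le> 2 * real T powr (-6) * ln (real T ^ 6 * real d)" by simp
    moreover have "(INF \<rho>\<in>\<Theta>. holevo d X P \<rho>) \<le> holevo d X P (\<sigma> k)"
      using INF_holevo_le[OF ch P] \<sigma> k by blast
    ultimately show ?thesis by linarith
  qed
  ultimately show ?thesis using \<sigma> ch N by blast
qed

theorem lemma6:
  "\<forall>d::nat. d \<ge> 1 \<longrightarrow> (\<exists>K::real. K > 0 \<and>
     (\<forall>(X::nat set) (\<Theta>::(nat \<Rightarrow> complex mat) set).
        finite X \<longrightarrow> \<Theta> \<noteq> {} \<longrightarrow> (\<forall>\<rho>\<in>\<Theta>. cq_channel d X \<rho>) \<longrightarrow>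
        (\<forall>T::nat. T \<ge> 1 \<longrightarrow>
          (\<exists>(N::nat) (\<sigma>::nat \<Rightarrow> nat \<Rightarrow> complex mat).
             (\<forall>k<N. cq_channel d X (\<sigma> k)) \<and>
             real N \<le> K ^ card X * real T ^ (6 * card X * d\<^sup>2) \<and>
             (\<forall>\<rho>\<in>\<Theta>. \<exists>k<N. \<forall>xs. length xs = T \<and> set xs \<subseteq> X \<longrightarrow>
                 trace_norm (channel_word \<rho> xs - channel_word (\<sigma> k) xs) \<le> real T powr (-5)) \<and>
             (\<forall>P. is_pmf_on X P \<longrightarrow> (\<forall>k<N.
                 holevo d X P (\<sigma> k) \<ge> (INF \<rho>\<in>\<Theta>. holevo d X P \<rho>)
                   - 2 * real T powr (-6) * ln (real T ^ 6 * real d)))))))"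
  apply (intro allI impI)
  subgoal for d
    by (intro exI[of _ "(5 * real d ^ 2) ^ (d ^ 2)"] conjI allI impI compound_channel_net) simp_all
  done

end
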